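(* Let $Q$ be a QNP and let $\pi$ be a policy for $Q$. If $\pi$ solves $Q$, then the policy $\pi^*$ defined in the context is a strong cyclic solution of the FOND problem $P=T(Q)$.
   Context: QNPs: $Q=\langle F,V,I,O,G\rangle$ with propositional variables $F$, numerical variables $V$ (non-negative reals), literals $p,\neg p$, $X=0$, $X>0$; actions with precondition $Pre(a)$, propositional effects $\mathit{Eff}(a)$, numerical effects $N(a)\subseteq\{Inc(X),Dec(X)\}$ (at most one per variable; $Dec(X)\in N(a)$ implies $X>0\in Pre(a)$); $a$ decrements $X$ if $Dec(X)\in N(a)$. A state assigns truth values to $F$ and reals $\ge0$ to $V$; initial states satisfy $I$ (closed world); goal states satisfy $G$; for applicable $a$, successors apply propositional effects, strictly increase $X$ for $Inc(X)$, strictly decrease $X$ for $Dec(X)$, rest unchanged. For $\epsilon>0$ an $\epsilon$-trajectory is such a sequence from an initial state where each change of a variable has magnitude $\ge\epsilon$ unless it goes from a value $<\epsilon$ to $0$. The boolean state $\bar s$ is the truth valuation on atoms $p\in F$ and $X=0$; a policy maps states to actions depending only on the boolean state; a maximal $\pi$-trajectory is infinite without goal, ends at its first goal state, or ends where $\pi$ is undefined/inapplicable; $\pi$ solves $Q$ iff for all $\epsilon>0$ all maximal $\epsilon$-$\pi$-trajectories reach a goal state. $T_D(Q)$ is the FOND problem over $F\cup\{p_{X=0}:X\in V\}$ reading $X=0$/$X>0$ as $p_{X=0}$/$\neg p_{X=0}$, replacing $Inc(X)$ by the deterministic effect $\neg p_{X=0}$ and $Dec(X)$ by the nondeterministic effect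 $\neg p_{X=0}\mid p_{X=0}$; its states are the boolean states and $\pi$ acts via $\bar s\mapsto\pi(s)$. $Dec(X)$/$Inc(X)$ actions are those with $Dec(X)$/$Inc(X)$ in $N(a)$. The policy graph $\mathcal G$ has as nodes the states of $T_D(Q)$ reachable from the initial state under $\pi$ and edges $(\bar s,\bar s')$ for $\bar s'$ a possible successor of $\bar s$ under $\pi(\bar s)$. Index the SCCs of $\mathcal G$ as $C_1,C_2,\dots$ so that if $C_i$ reaches $C_j$, $j\ne i$, then $i<j$; $scc(\bar s)$ is the index of the SCC containing $\bar s$. Fix a run of the following (modified) Sieve procedure on $\mathcal G$: repeatedly compute the SCCs of the current graph, choose an SCC $C$ and a variable $X$ such that $\pi(\bar s)$ is a $Dec(X)$ action for some $\bar s\in C$, $\pi(\bar s)$ is an $Inc(X)$ action for no $\bar s\in C$, and $X$ was not chosen in an earlier iteration for a component containing the states of $C$; remove all edges $(\bar s,\bar s')$ with $\bar s,\bar s'\in C$ and $\pi(\bar s)$ a $Dec(X)$ action; stop when no such choice exists. $stack(\bar s)$ is the sequence, in order of iterations, of the variables chosen in iterations whose chosen component contains $\bar s$. The FOND problem $T(Q)$: $n=|F|+|V|$, $Max=1+2^n$. Propositional variables: those of $T_D(Q)$, plus $in(X)$, $depth(d)$ ($0\le d\le|V|$), $index(X,d)$ ($1\le d\le|V|$), and counters $c(d)$ ($0\le d\le|V|$), $c_T$ over $\{0,\dots,Max\}$ encoded in binary; these encode a stack $\alpha$ of distinct variables ($X$ at position $d$ from the bottom iff $index(X,d)$; $|\alpha|=d$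 iff $depth(d)$). Initial state: that of $T_D(Q)$ plus $depth(0)$, counters $0$, other new atoms false; goal $G$. Actions: $Push(X,d)$ ($0\le d<|V|$): pre $\neg in(X),depth(d),c(d)<Max$; eff $in(X),index(X,d+1),depth(d+1),\neg depth(d),c(d):=c(d)+1,c(d+1):=0$. $Pop(X,d)$ ($1\le d\le|V|$): pre $in(X),index(X,d),depth(d)$; eff $\neg in(X),\neg index(X,d),\neg depth(d),depth(d-1)$. $Move$: pre $depth(0),c_T<Max$; eff $c_T:=c_T+1$. For $a\in O$ decrementing no variable: action $a$ with pre $Pre(a)$ plus $\neg in(Y)$ for each $Inc(Y)\in N(a)$, eff $\mathit{Eff}(a)$ plus $Y>0$ for each $Inc(Y)\in N(a)$. For $a$ decrementing some variable, $X$ decremented by $a$, $1\le d\le|V|$: action $a(X,d)$ with pre $Pre(a)$, $\neg in(Y)$ for $Inc(Y)\in N(a)$, $index(X,d)$; eff $\mathit{Eff}(a)$, $Y>0$ for $Inc(Y)\in N(a)$, nondeterministic $Z>0\mid Z=0$ for each $Dec(Z)\in N(a)$, $c(d'):=0$ for $d\le d'\le|V|$. A strong cyclic solution of a FOND problem is a policy such that from every state reachable from the initial state under it some goal state is reachable under it. States of $T(Q)$ are triples $\langle\bar s,c,\alpha\rangle$ (boolean state, counter values, stack). A stack $\alpha=X_1\cdots X_k$ is a prefix of $Z_1\cdots Z_m$ if $k\le m$ and $X_i=Z_i$ for $i\le k$; $\alpha X$ is $\alpha$ with $X$ pushed on top. $\pi^*(\langle\bar s,c,\alpha\rangle)$ is,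 taking the first applicable case: $Pop(X,d)$ if $c_T<scc(\bar s)$, $X$ is the top of $\alpha$ and $d=|\alpha|$; $Move$ if $c_T<scc(\bar s)$ and $\alpha$ is empty; $Pop(X,d)$ if $X$ is the top of $\alpha$, $d=|\alpha|$ and $\alpha$ is not a prefix of $stack(\bar s)$; $Push(X,d)$ if $\alpha X$ is a prefix of $stack(\bar s)$ and $d=|\alpha|$; $a$ if $\pi(\bar s)=a$ decrements no variable; $a(X,d)$ if $\pi(\bar s)=a$ decrements $X$, $X$ is at depth $d$ in $\alpha$, and $a$ decrements no other variable at a depth $d'<d$ in $\alpha$. *)

theory Defs
  imports Complex_Main "HOL-Library.Sublist"
begin

section \<open>Qualitative numerical problems (QNPs)\<close>

text \<open>Literals: p, not p (p in F), X = 0, X > 0 (X in V).\<close>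
datatype ('f,'v) lit = PT 'f | PF 'f | Zero 'v | Pos 'v

text \<open>Numerical effects: at most one per variable, hence a partial function.\<close>
datatype neff = Inc | Dec

record ('f,'v,'a) qnp =
  qF   :: "'f set"
  qV   :: "'v set"
  qI   :: "('f,'v) lit set"
  qO   :: "'a set"
  qPre :: "'a \<Rightarrow> ('f,'v) lit set"
  qEff :: "'a \<Rightarrow> ('f,'v) lit set"
  qN   :: "'a \<Rightarrow> 'v \<Rightarrow> neff option"
  qG   :: "('f,'v) lit set"

definition lit_over :: "'f set \<Rightarrow> 'v set \<Rightarrow> ('f,'v) lit \<Rightarrow> bool" where
  "lit_over F V l = (case l of PT p \<Rightarrow> p \<in> F | PF p \<Rightarrow> p \<in> F
                      | Zero X \<Rightarrow> X \<in> V | Pos X \<Rightarrow> X \<in> V)"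

definition consistent_lits :: "('f,'v) lit set \<Rightarrow> bool" where
  "consistent_lits L = ((\<forall>p. \<not> (PT p \<in> L \<and> PF p \<in> L)) \<and> (\<forall>X. \<not> (Zero X \<in> L \<and> Pos X \<in> L)))"

definition wf_qnp :: "('f,'v,'a) qnp \<Rightarrow> bool" where
  "wf_qnp Q = (finite (qF Q) \<and> finite (qV Q) \<and> finite (qO Q)
     \<and> (\<forall>l\<in>qI Q. lit_over (qF Q) (qV Q) l) \<and> consistent_lits (qI Q)
     \<and> (\<forall>l\<in>qG Q. lit_over (qF Q) (qV Q) l)
     \<and> (\<forall>a\<in>qO Q. (\<forall>l\<in>qPre Q a. lit_over (qF Q) (qV Q) l)
          \<and> (\<forall>l\<in>qEff Q a. (\<exists>p\<in>qF Q. l = PT p \<or> l = PF p))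
          \<and> consistent_lits (qEff Q a)
          \<and> (\<forall>X. qN Q a X \<noteq> None \<longrightarrow> X \<in> qV Q)
          \<and> (\<forall>X. qN Q a X = Some Dec \<longrightarrow> Pos X \<in> qPre Q a)))"

text \<open>QNP states: truth values of atoms and non-negative reals for the numerical variables.\<close>
type_synonym ('f,'v) qstate = "('f \<Rightarrow> bool) \<times> ('v \<Rightarrow> real)"
text \<open>Boolean states: truth values of atoms p and of atoms X = 0.\<close>
type_synonym ('f,'v) bstate = "('f \<Rightarrow> bool) \<times> ('v \<Rightarrow> bool)"

fun holds_q :: "('f,'v) qstate \<Rightarrow> ('f,'v) lit \<Rightarrow> bool" where
  "holds_q (\<sigma>, x) (PT p) = \<sigma> p"
| "holds_q (\<sigma>, x) (PF p) = (\<not> \<sigma> p)"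
| "holds_q (\<sigma>, x) (Zero X) = (x X = 0)"
| "holds_q (\<sigma>, x) (Pos X) = (x X > 0)"

fun holds_b :: "('f,'v) bstate \<Rightarrow> ('f,'v) lit \<Rightarrow> bool" where
  "holds_b (\<sigma>, z) (PT p) = \<sigma> p"
| "holds_b (\<sigma>, z) (PF p) = (\<not> \<sigma> p)"
| "holds_b (\<sigma>, z) (Zero X) = z X"
| "holds_b (\<sigma>, z) (Pos X) = (\<not> z X)"

definition bar :: "('f,'v,'a) qnp \<Rightarrow> ('f,'v) qstate \<Rightarrow> ('f,'v) bstate" where
  "bar Q s = (fst s, \<lambda>X. X \<in> qV Q \<and> snd s X = 0)"

definition apply_eff :: "('f,'v) lit set \<Rightarrow> ('f \<Rightarrow> bool) \<Rightarrow> ('f \<Rightarrow> bool)" where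
  "apply_eff E \<sigma> = (\<lambda>p. if PT p \<in> E then True else if PF p \<in> E then False else \<sigma> p)"

text \<open>Initial states (closed world for the propositional atoms and the atoms X = 0).\<close>
definition q_init :: "('f,'v,'a) qnp \<Rightarrow> ('f,'v) qstate \<Rightarrow> bool" where
  "q_init Q s = ((\<forall>p. fst s p = (PT p \<in> qI Q)) \<and> (\<forall>X. snd s X \<ge> 0)
                 \<and> (\<forall>X\<in>qV Q. snd s X = 0 \<longleftrightarrow> Zero X \<in> qI Q))"

definition q_goal :: "('f,'v,'a) qnp \<Rightarrow> ('f,'v) qstate \<Rightarrow> bool" where
  "q_goal Q s = (\<forall>l\<in>qG Q. holds_q s l)"

definition q_app :: "('f,'v,'a) qnp \<Rightarrow> 'a \<Rightarrow> ('f,'v) qstate \<Rightarrow> bool" where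
  "q_app Q a s = (a \<in> qO Q \<and> (\<forall>l\<in>qPre Q a. holds_q s l))"

definition q_succ :: "('f,'v,'a) qnp \<Rightarrow> 'a \<Rightarrow> ('f,'v) qstate \<Rightarrow> ('f,'v) qstate \<Rightarrow> bool" where
  "q_succ Q a s s' = (fst s' = apply_eff (qEff Q a) (fst s)
     \<and> (\<forall>X. case qN Q a X of
              Some Inc \<Rightarrow> snd s' X > snd s X
            | Some Dec \<Rightarrow> snd s' X < snd s X \<and> snd s' X \<ge> 0
            | None \<Rightarrow> snd s' X = snd s X))"

definition eps_ok :: "real \<Rightarrow> ('v \<Rightarrow> real) \<Rightarrow> ('v \<Rightarrow> real) \<Rightarrow> bool" where
  "eps_ok \<epsilon> x x' = (\<forall>X. x' X \<noteq> x X \<longrightarrow> (\<bar>x' X - x X\<bar> \<ge> \<epsilon> \<or> (x X < \<epsilon> \<and> x' X = 0)))"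

type_synonym ('f,'v,'a) policy = "('f,'v) bstate \<Rightarrow> 'a option"

definition is_policy :: "('f,'v,'a) qnp \<Rightarrow> ('f,'v,'a) policy \<Rightarrow> bool" where
  "is_policy Q \<pi> = (\<forall>b a. \<pi> b = Some a \<longrightarrow> a \<in> qO Q)"

definition q_step :: "('f,'v,'a) qnp \<Rightarrow> ('f,'v,'a) policy \<Rightarrow> real
                       \<Rightarrow> ('f,'v) qstate \<Rightarrow> ('f,'v) qstate \<Rightarrow> bool" where
  "q_step Q \<pi> \<epsilon> s s' = (\<exists>a. \<pi> (bar Q s) = Some a \<and> q_app Q a s \<and> q_succ Q a s s'
                             \<and> eps_ok \<epsilon> (snd s) (snd s'))"

text \<open>pi solves Q: for every eps > 0, every maximal eps-pi-trajectory reaches a goal, i.e.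
  (i) every infinite eps-pi-trajectory contains a goal state, and
  (ii) every finite goal-free eps-pi-trajectory can be extended by an applicable pi-action.\<close>
definition solves :: "('f,'v,'a) qnp \<Rightarrow> ('f,'v,'a) policy \<Rightarrow> bool" where
  "solves Q \<pi> = (\<forall>\<epsilon>>0.
     (\<forall>f :: nat \<Rightarrow> ('f,'v) qstate. q_init Q (f 0) \<and> (\<forall>i. q_step Q \<pi> \<epsilon> (f i) (f (Suc i)))
          \<longrightarrow> (\<exists>i. q_goal Q (f i)))
   \<and> (\<forall>(f :: nat \<Rightarrow> ('f,'v) qstate) n. q_init Q (f 0) \<and> (\<forall>i<n. q_step Q \<pi> \<epsilon> (f i) (f (Suc i)))
          \<and> (\<forall>i\<le>n. \<not> q_goal Q (f i))
          \<longrightarrow> (\<exists>a. \<pi> (bar Q (f n)) = Some a \<and> q_app Q a (f n))))"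

section \<open>The FOND problem T_D(Q) and the policy graph\<close>

definition td_init :: "('f,'v,'a) qnp \<Rightarrow> ('f,'v) bstate" where
  "td_init Q = (\<lambda>p. PT p \<in> qI Q, \<lambda>X. Zero X \<in> qI Q)"

definition td_goal :: "('f,'v,'a) qnp \<Rightarrow> ('f,'v) bstate \<Rightarrow> bool" where
  "td_goal Q b = (\<forall>l\<in>qG Q. holds_b b l)"

definition td_app :: "('f,'v,'a) qnp \<Rightarrow> 'a \<Rightarrow> ('f,'v) bstate \<Rightarrow> bool" where
  "td_app Q a b = (a \<in> qO Q \<and> (\<forall>l\<in>qPre Q a. holds_b b l))"

text \<open>Inc(X) becomes the effect X>0; Dec(X) the non-deterministic effect X>0 | X=0.\<close>
definition td_succ :: "('f,'v,'a) qnp \<Rightarrow> 'a \<Rightarrow> ('f,'v) bstate \<Rightarrow> ('f,'v) bstate \<Rightarrow> bool" where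
  "td_succ Q a b b' = (fst b' = apply_eff (qEff Q a) (fst b)
     \<and> (\<forall>X. case qN Q a X of
              Some Inc \<Rightarrow> snd b' X = False
            | Some Dec \<Rightarrow> True
            | None \<Rightarrow> snd b' X = snd b X))"

definition pg_rel :: "('f,'v,'a) qnp \<Rightarrow> ('f,'v,'a) policy \<Rightarrow> (('f,'v) bstate \<times> ('f,'v) bstate) set" where
  "pg_rel Q \<pi> = {(b, b'). \<not> td_goal Q b \<and> (\<exists>a. \<pi> b = Some a \<and> td_app Q a b \<and> td_succ Q a b b')}"

definition pg_nodes :: "('f,'v,'a) qnp \<Rightarrow> ('f,'v,'a) policy \<Rightarrow> ('f,'v) bstate set" where
  "pg_nodes Q \<pi> = {b. (td_init Q, b) \<in> (pg_rel Q \<pi>)\<^sup>*}"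

definition pg_edges :: "('f,'v,'a) qnp \<Rightarrow> ('f,'v,'a) policy \<Rightarrow> (('f,'v) bstate \<times> ('f,'v) bstate) set" where
  "pg_edges Q \<pi> = {(b, b') \<in> pg_rel Q \<pi>. b \<in> pg_nodes Q \<pi>}"

text \<open>sc is an indexing C_1, C_2, ..., C_m of the SCCs of the policy graph compatible with
  reachability (sc b = index of the SCC containing b).\<close>
definition scc_indexing :: "('f,'v,'a) qnp \<Rightarrow> ('f,'v,'a) policy \<Rightarrow> (('f,'v) bstate \<Rightarrow> nat) \<Rightarrow> bool" where
  "scc_indexing Q \<pi> sc = (let N = pg_nodes Q \<pi>; E = pg_edges Q \<pi> in
      (\<forall>b\<in>N. \<forall>b'\<in>N. sc b = sc b' \<longleftrightarrow> ((b, b') \<in> E\<^sup>* \<and> (b', b) \<in> E\<^sup>*))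
    \<and> (\<forall>b\<in>N. \<forall>b'\<in>N. (b, b') \<in> E\<^sup>* \<and> sc b \<noteq> sc b' \<longrightarrow> sc b < sc b')
    \<and> (\<exists>m. sc ` N = {1..m}))"

section \<open>The (modified) Sieve procedure\<close>

definition is_dec :: "('f,'v,'a) qnp \<Rightarrow> ('f,'v,'a) policy \<Rightarrow> ('f,'v) bstate \<Rightarrow> 'v \<Rightarrow> bool" where
  "is_dec Q \<pi> b X = (\<exists>a. \<pi> b = Some a \<and> qN Q a X = Some Dec)"

definition is_inc :: "('f,'v,'a) qnp \<Rightarrow> ('f,'v,'a) policy \<Rightarrow> ('f,'v) bstate \<Rightarrow> 'v \<Rightarrow> bool" where
  "is_inc Q \<pi> b X = (\<exists>a. \<pi> b = Some a \<and> qN Q a X = Some Inc)"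

text \<open>A run of the Sieve is recorded as the list of its choices (component, variable).\<close>
type_synonym ('f,'v) sieve_run = "(('f,'v) bstate set \<times> 'v) list"

text \<open>Edges of the current graph before iteration k.\<close>
definition sieve_edges :: "('f,'v,'a) qnp \<Rightarrow> ('f,'v,'a) policy \<Rightarrow> ('f,'v) sieve_run \<Rightarrow> nat
                            \<Rightarrow> (('f,'v) bstate \<times> ('f,'v) bstate) set" where
  "sieve_edges Q \<pi> run k = pg_edges Q \<pi> -
     {(b, b'). \<exists>j<k. b \<in> fst (run ! j) \<and> b' \<in> fst (run ! j) \<and> is_dec Q \<pi> b (snd (run ! j))}"

definition is_scc :: "'n set \<Rightarrow> ('n \<times> 'n) set \<Rightarrow> 'n set \<Rightarrow> bool" where
  "is_scc N E C = (\<exists>b\<in>N. C = {b'\<in>N. (b, b') \<in> E\<^sup>* \<and> (b', b) \<in> E\<^sup>*})"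

definition sieve_choice :: "('f,'v,'a) qnp \<Rightarrow> ('f,'v,'a) policy \<Rightarrow> ('f,'v) sieve_run \<Rightarrow> nat
                             \<Rightarrow> ('f,'v) bstate set \<Rightarrow> 'v \<Rightarrow> bool" where
  "sieve_choice Q \<pi> run k C X =
     (is_scc (pg_nodes Q \<pi>) (sieve_edges Q \<pi> run k) C
      \<and> (\<exists>b\<in>C. is_dec Q \<pi> b X) \<and> (\<forall>b\<in>C. \<not> is_inc Q \<pi> b X)
      \<and> (\<forall>j<k. C \<subseteq> fst (run ! j) \<longrightarrow> snd (run ! j) \<noteq> X))"

definition sieve_run :: "('f,'v,'a) qnp \<Rightarrow> ('f,'v,'a) policy \<Rightarrow> ('f,'v) sieve_run \<Rightarrow> bool" where
  "sieve_run Q \<pi> run =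
     ((\<forall>k<length run. sieve_choice Q \<pi> run k (fst (run ! k)) (snd (run ! k)))
      \<and> \<not> (\<exists>C X. sieve_choice Q \<pi> run (length run) C X))"

definition stack :: "('f,'v) sieve_run \<Rightarrow> ('f,'v) bstate \<Rightarrow> 'v list" where
  "stack run b = map snd (filter (\<lambda>(C, X). b \<in> C) run)"

section \<open>The FOND problem T(Q)\<close>

text \<open>States of T(Q): (boolean state, counters c(d), counter c_T, stack alpha listed from the bottom).
  in(X) iff X in set alpha; depth(d) iff length alpha = d; index(X,d) iff alpha!(d-1) = X.\<close>
type_synonym ('f,'v) tstate = "('f,'v) bstate \<times> (nat \<Rightarrow> nat) \<times> nat \<times> 'v list"

datatype ('v,'a) tact = Push 'v nat | Pop 'v nat | Move | Act 'a | DAct 'a 'v nat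

definition Tmax :: "('f,'v,'a) qnp \<Rightarrow> nat" where
  "Tmax Q = 1 + 2 ^ (card (qF Q) + card (qV Q))"

definition decrements_some :: "('f,'v,'a) qnp \<Rightarrow> 'a \<Rightarrow> bool" where
  "decrements_some Q a = (\<exists>X. qN Q a X = Some Dec)"

fun t_app :: "('f,'v,'a) qnp \<Rightarrow> ('v,'a) tact \<Rightarrow> ('f,'v) tstate \<Rightarrow> bool" where
  "t_app Q (Push X d) (b, c, cT, \<alpha>) =
     (X \<in> qV Q \<and> d < card (qV Q) \<and> X \<notin> set \<alpha> \<and> length \<alpha> = d \<and> c d < Tmax Q)"
| "t_app Q (Pop X d) (b, c, cT, \<alpha>) =
     (X \<in> qV Q \<and> 1 \<le> d \<and> d \<le> card (qV Q) \<and> X \<in> set \<alpha> \<and> d \<le> length \<alpha> \<and> \<alpha> ! (d - 1) = X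
      \<and> length \<alpha> = d)"
| "t_app Q Move (b, c, cT, \<alpha>) = (length \<alpha> = 0 \<and> cT < Tmax Q)"
| "t_app Q (Act a) (b, c, cT, \<alpha>) =
     (\<not> decrements_some Q a \<and> td_app Q a b \<and> (\<forall>Y. qN Q a Y = Some Inc \<longrightarrow> Y \<notin> set \<alpha>))"
| "t_app Q (DAct a X d) (b, c, cT, \<alpha>) =
     (qN Q a X = Some Dec \<and> 1 \<le> d \<and> d \<le> card (qV Q) \<and> td_app Q a b
      \<and> (\<forall>Y. qN Q a Y = Some Inc \<longrightarrow> Y \<notin> set \<alpha>) \<and> d \<le> length \<alpha> \<and> \<alpha> ! (d - 1) = X)"

fun t_succ :: "('f,'v,'a) qnp \<Rightarrow> ('v,'a) tact \<Rightarrow> ('f,'v) tstate \<Rightarrow> ('f,'v) tstate \<Rightarrow> bool" where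
  "t_succ Q (Push X d) (b, c, cT, \<alpha>) s' = (s' = (b, c(d := c d + 1, d + 1 := 0), cT, \<alpha> @ [X]))"
| "t_succ Q (Pop X d) (b, c, cT, \<alpha>) s' = (s' = (b, c, cT, butlast \<alpha>))"
| "t_succ Q Move (b, c, cT, \<alpha>) s' = (s' = (b, c, cT + 1, \<alpha>))"
| "t_succ Q (Act a) (b, c, cT, \<alpha>) s' = (\<exists>b'. td_succ Q a b b' \<and> s' = (b', c, cT, \<alpha>))"
| "t_succ Q (DAct a X d) (b, c, cT, \<alpha>) s' =
     (\<exists>b'. td_succ Q a b b'
        \<and> s' = (b', \<lambda>d'. if d \<le> d' \<and> d' \<le> card (qV Q) then 0 else c d', cT, \<alpha>))"

definition t_init :: "('f,'v,'a) qnp \<Rightarrow> ('f,'v) tstate" where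
  "t_init Q = (td_init Q, \<lambda>_. 0, 0, [])"

definition t_goal :: "('f,'v,'a) qnp \<Rightarrow> ('f,'v) tstate \<Rightarrow> bool" where
  "t_goal Q s = td_goal Q (fst s)"

definition t_rel :: "('f,'v,'a) qnp \<Rightarrow> (('f,'v) tstate \<Rightarrow> ('v,'a) tact option)
                      \<Rightarrow> (('f,'v) tstate \<times> ('f,'v) tstate) set" where
  "t_rel Q P = {(s, s'). \<not> t_goal Q s \<and> (\<exists>A. P s = Some A \<and> t_app Q A s \<and> t_succ Q A s s')}"

definition strong_cyclic :: "('f,'v,'a) qnp \<Rightarrow> (('f,'v) tstate \<Rightarrow> ('v,'a) tact option) \<Rightarrow> bool" where
  "strong_cyclic Q P = (\<forall>s. (t_init Q, s) \<in> (t_rel Q P)\<^sup>* \<longrightarrow>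
                           (\<exists>g. (s, g) \<in> (t_rel Q P)\<^sup>* \<and> t_goal Q g))"

fun pistar :: "('f,'v,'a) qnp \<Rightarrow> ('f,'v,'a) policy \<Rightarrow> (('f,'v) bstate \<Rightarrow> nat) \<Rightarrow> ('f,'v) sieve_run
               \<Rightarrow> ('f,'v) tstate \<Rightarrow> ('v,'a) tact option" where
  "pistar Q \<pi> sc run (b, c, cT, \<alpha>) =
    (if cT < sc b \<and> \<alpha> \<noteq> [] then Some (Pop (last \<alpha>) (length \<alpha>))
     else if cT < sc b \<and> \<alpha> = [] then Some Move
     else if \<alpha> \<noteq> [] \<and> \<not> prefix \<alpha> (stack run b) then Some (Pop (last \<alpha>) (length \<alpha>))
     else if (\<exists>X. prefix (\<alpha> @ [X]) (stack run b))
       then Some (Push (SOME X. prefix (\<alpha> @ [X]) (stack run b)) (length \<alpha>))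
     else (case \<pi> b of
             None \<Rightarrow> None
           | Some a \<Rightarrow>
              (if \<not> decrements_some Q a then Some (Act a)
               else if (\<exists>X d. qN Q a X = Some Dec \<and> 1 \<le> d \<and> d \<le> length \<alpha> \<and> \<alpha> ! (d - 1) = X
                          \<and> (\<forall>d'. 1 \<le> d' \<and> d' < d \<longrightarrow> qN Q a (\<alpha> ! (d' - 1)) \<noteq> Some Dec))
               then Some (case (SOME (X, d). qN Q a X = Some Dec \<and> 1 \<le> d \<and> d \<le> length \<alpha>
                                  \<and> \<alpha> ! (d - 1) = X
                                  \<and> (\<forall>d'. 1 \<le> d' \<and> d' < d \<longrightarrow> qN Q a (\<alpha> ! (d' - 1)) \<noteq> Some Dec))
                          of (X, d) \<Rightarrow> DAct a X d)
               else None)))"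

end

theory Submission
  imports Defs
begin

text \<open>The policy \<pi>* simulates \<pi> on boolean states: above a state b it pops its stack (first
  raising c_T to sc b if needed), pushes stack(b), and applies \<pi>(b), charged to the shallowest
  variable of stack(b) that \<pi>(b) decrements. Such a variable exists because the Sieve is sound:
  as \<pi> solves Q, a goal-free infinite path of the policy graph along which every decremented
  variable is regularly increased or driven to 0 is impossible, since it is realized by a
  1-trajectory; so no cycle survives the Sieve, and a decrement outside stack(b) would let the
  Sieve continue at the component {b}. The counter c(d) is bounded by the number of nodes reaching b
  along edges that keep the d lowest stack entries and decrement none of them; it is incremented
  only after such an edge has left the SCC or lost the entry at depth d + 1, which cannot be
  undone and strictly increases that number, so no counter reaches Max. Finally, every node of the
  policy graph reaches a goal, and \<pi>* follows such a path from every reachable state.\<close>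

section \<open>Walks and strongly connected components\<close>

lemma walk_rtrancl:
  assumes "\<forall>i<n. (w i, w (Suc i)) \<in> r" and "i \<le> j" and "j \<le> n"
  shows "(w i, w j) \<in> r\<^sup>*"
  using assms(2,3)
proof (induction j)
  case 0
  then show ?case by simp
next
  case (Suc j)
  then show ?case
    using assms(1) by (cases "i = Suc j") (auto intro: rtrancl_into_rtrancl)
qed

lemma rtrancl_walkE:
  assumes "(x, y) \<in> r\<^sup>*"
  obtains w n where "w 0 = x" and "w n = y" and "\<forall>i<n. (w i, w (Suc i)) \<in> r"
  using assms by (metis rtrancl_power relpow_fun_conv)

lemma walk_append:
  assumes "w1 0 = x" "w1 n1 = y" "\<forall>i<n1. (w1 i, w1 (Suc i)) \<in> r"
    and "w2 0 = y" "w2 n2 = z" "\<forall>i<n2. (w2 i, w2 (Suc i)) \<in> r"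
  obtains w where "w 0 = x" and "w (n1 + n2) = z" and "\<forall>i<n1 + n2. (w i, w (Suc i)) \<in> r"
    and "w1 ` {..n1} \<union> w2 ` {..n2} \<subseteq> w ` {..n1 + n2}"
proof -
  define w where "w i = (if i \<le> n1 then w1 i else w2 (i - n1))" for i
  have shift: "w (n1 + j) = w2 j" for j
    using assms(2,4) by (cases j) (auto simp: w_def)
  have "\<forall>i<n1 + n2. (w i, w (Suc i)) \<in> r"
  proof (intro allI impI)
    fix i assume i: "i < n1 + n2"
    show "(w i, w (Suc i)) \<in> r"
    proof (cases "i < n1")
      case True
      then show ?thesis using assms(3) by (simp add: w_def)
    next
      case False
      then obtain j where "i = n1 + j" "j < n2" using i le_Suc_ex by (metis add_less_cancel_left not_less)
      then show ?thesis using assms(6) shift[of j] shift[of "Suc j"] by simp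
    qed
  qed
  moreover have "w1 ` {..n1} \<union> w2 ` {..n2} \<subseteq> w ` {..n1 + n2}"
  proof -
    have "w1 ` {..n1} = w ` {..n1}" by (auto simp: w_def)
    moreover have "w2 ` {..n2} = w ` ((+) n1 ` {..n2})" using shift by (auto simp: image_image)
    ultimately show ?thesis by auto
  qed
  moreover have "w 0 = x" using assms(1) by (simp add: w_def)
  moreover have "w (n1 + n2) = z" using shift[of n2] assms(5) by simp
  ultimately show thesis using that by blast
qed

lemma closed_walk_through:
  assumes "finite S" and "\<forall>s\<in>S. (b, s) \<in> r\<^sup>* \<and> (s, b) \<in> r\<^sup>*" and "(b, b) \<in> r\<^sup>+"
  shows "\<exists>w L. 0 < L \<and> w 0 = b \<and> w L = b \<and> (\<forall>i<L. (w i, w (Suc i)) \<in> r) \<and> S \<subseteq> w ` {..L}"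
  using assms
proof (induction S rule: finite_induct)
  case empty
  obtain n where "0 < n" "(b, b) \<in> r ^^ n" using empty(2) trancl_power by blast
  then show ?case by (auto simp: relpow_fun_conv)
next
  case (insert s S)
  then obtain w L where w: "0 < L" "w 0 = b" "w L = b" "\<forall>i<L. (w i, w (Suc i)) \<in> r"
    "S \<subseteq> w ` {..L}"
    by blast
  obtain w1 n1 w2 n2 where p1: "w1 0 = b" "w1 n1 = s" "\<forall>i<n1. (w1 i, w1 (Suc i)) \<in> r"
    and p2: "w2 0 = s" "w2 n2 = b" "\<forall>i<n2. (w2 i, w2 (Suc i)) \<in> r"
    using insert.prems(1) by (metis insertI1 rtrancl_walkE)
  obtain w' where w': "w' 0 = b" "w' (L + n1) = s" "\<forall>i<L + n1. (w' i, w' (Suc i)) \<in> r"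
    "w ` {..L} \<union> w1 ` {..n1} \<subseteq> w' ` {..L + n1}"
    using walk_append[OF w(2,3,4) p1] .
  obtain w'' where w'': "w'' 0 = b" "w'' (L + n1 + n2) = b"
    "\<forall>i<L + n1 + n2. (w'' i, w'' (Suc i)) \<in> r"
    "w' ` {..L + n1} \<union> w2 ` {..n2} \<subseteq> w'' ` {..L + n1 + n2}"
    using walk_append[OF w'(1,2,3) p2] .
  have "s \<in> w1 ` {..n1}" using p1 by auto
  then have "insert s S \<subseteq> w'' ` {..L + n1 + n2}" using w(5) w'(4) w''(4) by blast
  then show ?case using w'' w(1) by (intro exI[of _ w''] exI[of _ "L + n1 + n2"]) auto
qed

lemma walk_then_path:
  assumes "\<forall>i<n. (w i, w (Suc i)) \<in> r" and "w n = q 0" and "\<forall>i. (q i, q (Suc i)) \<in> r"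
  obtains p where "\<forall>i. (p i, p (Suc i)) \<in> r" and "\<forall>i\<le>n. p i = w i" and "\<forall>i. p (n + i) = q i"
proof -
  define p where "p i = (if i \<le> n then w i else q (i - n))" for i
  have prefix: "\<forall>i\<le>n. p i = w i" by (simp add: p_def)
  have shift: "\<forall>i. p (n + i) = q i" using assms(2) by (auto simp: p_def)
  have "(p i, p (Suc i)) \<in> r" for i
  proof (cases "i < n")
    case True
    then show ?thesis using assms(1) by (simp add: p_def)
  next
    case False
    then obtain j where "i = n + j" by (metis le_add_diff_inverse not_less)
    then show ?thesis using assms(3) shift by (metis add_Suc_right)
  qed
  then show thesis using that prefix shift by blast
qed

lemma closed_walk_periodic:
  assumes "0 < L" and "w L = w 0" and "\<forall>i<L. (w i, w (Suc i)) \<in> r"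
  shows "(w (i mod L), w (Suc i mod L)) \<in> r"
proof (cases "Suc (i mod L) = L")
  case True
  then have "Suc i mod L = 0" by (simp add: mod_Suc)
  then show ?thesis using assms True by (metis lessI)
next
  case False
  then have "Suc i mod L = Suc (i mod L)" by (simp add: mod_Suc)
  then show ?thesis using assms(1,3) by simp
qed

lemma mod_eq_in_window:
  fixes L :: nat
  assumes "t < L"
  obtains k where "m \<le> k" and "k < m + L" and "k mod L = t"
proof -
  define r where "r = m mod L"
  define q where "q = m div L"
  have m: "m = q * L + r" unfolding q_def r_def by simp
  have rL: "r < L" using assms unfolding r_def by simp
  show thesis
  proof (cases "r \<le> t")
    case True
    have "(q * L + t) mod L = t" using assms by simp
    moreover have "m \<le> q * L + t" "q * L + t < m + L" using m True assms by linarith+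
    ultimately show ?thesis using that by blast
  next
    case False
    have "(Suc q * L + t) mod L = t" using assms by (metis mod_less mod_mult_self3)
    moreover have "m \<le> Suc q * L + t" "Suc q * L + t < m + L" using m False rL by simp_all
    ultimately show ?thesis using that by blast
  qed
qed

lemma prefix_snoc_if_strict:
  assumes "prefix xs ys" and "xs \<noteq> ys"
  shows "\<exists>x. prefix (xs @ [x]) ys"
proof -
  obtain zs where ys: "ys = xs @ zs" using assms(1) by (auto simp: prefix_def)
  then obtain z zs' where "zs = z # zs'" using assms(2) by (cases zs) auto
  then show ?thesis using ys by (auto simp: prefix_def)
qed

lemma not_prefix_snoc_self [simp]: "\<not> prefix (xs @ [x]) xs"
  by (auto dest: prefix_length_le)

definition scc_of :: "'n set \<Rightarrow> ('n \<times> 'n) set \<Rightarrow> 'n \<Rightarrow> 'n set" where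
  "scc_of N r b = {b' \<in> N. (b, b') \<in> r\<^sup>* \<and> (b', b) \<in> r\<^sup>*}"

lemma is_scc_eq_scc_of: "is_scc N r C \<Longrightarrow> b \<in> C \<Longrightarrow> C = scc_of N r b"
  unfolding is_scc_def scc_of_def by (auto intro: rtrancl_trans)

lemma is_scc_scc_of: "b \<in> N \<Longrightarrow> is_scc N r (scc_of N r b)"
  unfolding is_scc_def scc_of_def by blast

lemma scc_of_mono: "r \<subseteq> r' \<Longrightarrow> scc_of N r b \<subseteq> scc_of N r' b"
  unfolding scc_of_def using rtrancl_mono by blast

lemma scc_of_trivial:
  assumes "b \<in> N" and "(b, b) \<notin> r\<^sup>+"
  shows "scc_of N r b = {b}"
proof -
  have "b' = b" if "(b, b') \<in> r\<^sup>*" "(b', b) \<in> r\<^sup>*" for b'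
    using that assms(2) by (metis rtrancl_eq_or_trancl trancl_rtrancl_trancl)
  then show ?thesis using assms(1) by (auto simp: scc_of_def)
qed

lemma scc_of_successor:
  assumes "(b, b) \<in> r\<^sup>+" and "u \<in> scc_of N r b" and "Range r \<subseteq> N"
  obtains v where "v \<in> scc_of N r b" and "(u, v) \<in> r"
proof -
  have ub: "(u, b) \<in> r\<^sup>*" and bu: "(b, u) \<in> r\<^sup>*" using assms(2) by (auto simp: scc_of_def)
  have "(u, u) \<in> r\<^sup>+" using rtrancl_trancl_trancl[OF ub assms(1)] bu by (rule trancl_rtrancl_trancl)
  then obtain v where v: "(u, v) \<in> r" "(v, u) \<in> r\<^sup>*" by (meson tranclD)
  have "v \<in> scc_of N r b"
    using v assms(3) rtrancl_into_rtrancl[OF bu v(1)] rtrancl_trans[OF v(2) ub]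
    by (auto simp: scc_of_def)
  with v(1) show thesis using that by blast
qed

lemma rtrancl_Restr_scc:
  fixes r :: "('n \<times> 'n) set" and u :: 'n
  defines "C \<equiv> {x. (u, x) \<in> r\<^sup>* \<and> (x, u) \<in> r\<^sup>*}"
  assumes "x \<in> C"
  shows "(u, x) \<in> (Restr r C)\<^sup>*" and "(x, u) \<in> (Restr r C)\<^sup>*"
proof -
  have "(x, u) \<in> r\<^sup>* \<longrightarrow> (u, x) \<in> (Restr r C)\<^sup>*" if "(u, x) \<in> r\<^sup>*" for x
    using that
  proof (induction rule: rtrancl_induct)
    case base
    then show ?case by simp
  next
    case (step y z)
    show ?case
    proof
      assume "(z, u) \<in> r\<^sup>*"
      moreover have "(y, u) \<in> r\<^sup>*" using step(2) calculation by (rule converse_rtrancl_into_rtrancl)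
      ultimately have "(y, z) \<in> Restr r C" using step(1,2) by (auto simp: C_def)
      moreover have "(u, y) \<in> (Restr r C)\<^sup>*" using step(3) \<open>(y, u) \<in> r\<^sup>*\<close> by blast
      ultimately show "(u, z) \<in> (Restr r C)\<^sup>*" by (meson rtrancl_into_rtrancl)
    qed
  qed
  then show "(u, x) \<in> (Restr r C)\<^sup>*" using assms(2) by (simp add: C_def)
  have "(u, x) \<in> r\<^sup>* \<longrightarrow> (x, u) \<in> (Restr r C)\<^sup>*" if "(x, u) \<in> r\<^sup>*" for x
    using that
  proof (induction rule: converse_rtrancl_induct)
    case base
    then show ?case by simp
  next
    case (step y z)
    show ?case
    proof
      assume "(u, y) \<in> r\<^sup>*"
      moreover have "(u, z) \<in> r\<^sup>*" using calculation step(1) by (rule rtrancl_into_rtrancl)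
      ultimately have "(y, z) \<in> Restr r C" using step(1,2) by (auto simp: C_def)
      moreover have "(z, u) \<in> (Restr r C)\<^sup>*" using step(3) \<open>(u, z) \<in> r\<^sup>*\<close> by blast
      ultimately show "(y, u) \<in> (Restr r C)\<^sup>*" by (meson converse_rtrancl_into_rtrancl)
    qed
  qed
  then show "(x, u) \<in> (Restr r C)\<^sup>*" using assms(2) by (simp add: C_def)
qed

lemma distinct_map_filter_nth:
  assumes "\<forall>i j. i < j \<and> j < length xs \<and> P (xs ! i) \<and> P (xs ! j) \<longrightarrow> f (xs ! i) \<noteq> f (xs ! j)"
  shows "distinct (map f (filter P xs))"
  using assms
proof (induction xs)
  case Nil
  then show ?case by simp
next
  case (Cons x xs)
  have "distinct (map f (filter P xs))"
    using Cons.prems by (intro Cons.IH) (metis Suc_mono length_Cons nth_Cons_Suc)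
  moreover have "f x \<notin> f ` set (filter P xs)" if "P x"
  proof
    assume "f x \<in> f ` set (filter P xs)"
    then obtain j where "j < length xs" "P (xs ! j)" "f (xs ! j) = f x"
      by (auto simp: in_set_conv_nth)
    then show False using Cons.prems[rule_format, of 0 "Suc j"] that by auto
  qed
  ultimately show ?case by auto
qed

section \<open>The policy graph of a well-formed QNP\<close>

locale qnp_policy =
  fixes Q :: "('f,'v,'a) qnp" and \<pi> :: "('f,'v,'a) policy"
  assumes wf: "wf_qnp Q" and policy: "is_policy Q \<pi>"
begin

abbreviation "N \<equiv> pg_nodes Q \<pi>"
abbreviation "E \<equiv> pg_edges Q \<pi>"
abbreviation "R \<equiv> pg_rel Q \<pi>"

lemma finite_qF: "finite (qF Q)" and finite_qV: "finite (qV Q)"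
  using wf by (auto simp: wf_qnp_def)

lemma wf_action:
  assumes "a \<in> qO Q"
  shows "l \<in> qPre Q a \<Longrightarrow> lit_over (qF Q) (qV Q) l"
    and "l \<in> qEff Q a \<Longrightarrow> \<exists>p\<in>qF Q. l = PT p \<or> l = PF p"
    and "qN Q a X \<noteq> None \<Longrightarrow> X \<in> qV Q"
    and "qN Q a X = Some Dec \<Longrightarrow> Pos X \<in> qPre Q a"
  using wf assms unfolding wf_qnp_def by blast+

lemma policy_action: "\<pi> b = Some a \<Longrightarrow> a \<in> qO Q"
  using policy unfolding is_policy_def by blast

lemma td_app_dec_pos: "td_app Q a b \<Longrightarrow> qN Q a X = Some Dec \<Longrightarrow> \<not> snd b X"
  using wf_action(4) by (cases b) (force simp: td_app_def)

lemma td_succ_None: "td_succ Q a b b' \<Longrightarrow> qN Q a X = None \<Longrightarrow> snd b' X = snd b X"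
  unfolding td_succ_def by (metis option.simps(4))

lemma td_succ_Inc: "td_succ Q a b b' \<Longrightarrow> qN Q a X = Some Inc \<Longrightarrow> \<not> snd b' X"
  unfolding td_succ_def by (metis neff.simps(3) option.simps(5))

definition bstate_space :: "('f,'v) bstate set" where
  "bstate_space = {b. (\<forall>p. fst b p \<longrightarrow> p \<in> qF Q) \<and> (\<forall>X. snd b X \<longrightarrow> X \<in> qV Q)}"

lemma td_init_in_bstate_space: "td_init Q \<in> bstate_space"
  using wf unfolding bstate_space_def td_init_def wf_qnp_def lit_over_def by force

lemma pg_rel_bstate_space:
  assumes "(b, b') \<in> R" and "b \<in> bstate_space"
  shows "b' \<in> bstate_space"
proof -
  obtain a where a: "td_app Q a b" "td_succ Q a b b'"
    using assms(1) by (auto simp: pg_rel_def)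
  have aO: "a \<in> qO Q" using a(1) by (simp add: td_app_def)
  have "p \<in> qF Q" if "fst b' p" for p
  proof -
    have "PT p \<in> qEff Q a \<or> fst b p"
      using a(2) that by (auto simp: td_succ_def apply_eff_def split: if_splits)
    then show ?thesis using wf_action(2)[OF aO] assms(2) by (auto simp: bstate_space_def)
  qed
  moreover have "X \<in> qV Q" if "snd b' X" for X
  proof (cases "qN Q a X")
    case None
    then show ?thesis using td_succ_None[OF a(2)] that assms(2) by (auto simp: bstate_space_def)
  next
    case Some
    then show ?thesis using wf_action(3)[OF aO] by simp
  qed
  ultimately show ?thesis by (simp add: bstate_space_def)
qed

lemma pg_nodes_subset_bstate_space: "N \<subseteq> bstate_space"
proof
  fix b assume "b \<in> N"
  then have "(td_init Q, b) \<in> R\<^sup>*" by (simp add: pg_nodes_def)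
  then show "b \<in> bstate_space"
    by (induction rule: rtrancl_induct) (auto intro: td_init_in_bstate_space pg_rel_bstate_space)
qed

lemma finite_bstate_space: "finite bstate_space"
  and card_bstate_space: "card bstate_space \<le> 2 ^ (card (qF Q) + card (qV Q))"
proof -
  let ?f = "\<lambda>(A, B). ((\<lambda>p. p \<in> A), (\<lambda>X. X \<in> B))"
  have sub: "bstate_space \<subseteq> ?f ` (Pow (qF Q) \<times> Pow (qV Q))"
  proof
    fix b assume "b \<in> bstate_space"
    then have "({p. fst b p}, {X. snd b X}) \<in> Pow (qF Q) \<times> Pow (qV Q)"
      by (auto simp: bstate_space_def)
    moreover have "b = ?f ({p. fst b p}, {X. snd b X})" by simp
    ultimately show "b \<in> ?f ` (Pow (qF Q) \<times> Pow (qV Q))" by blast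
  qed
  have fin: "finite (Pow (qF Q) \<times> Pow (qV Q))" using finite_qF finite_qV by simp
  then show "finite bstate_space" using sub finite_subset by blast
  have "card bstate_space \<le> card (?f ` (Pow (qF Q) \<times> Pow (qV Q)))"
    using sub fin by (intro card_mono) auto
  also have "\<dots> \<le> card (Pow (qF Q) \<times> Pow (qV Q))" by (rule card_image_le[OF fin])
  also have "\<dots> = 2 ^ (card (qF Q) + card (qV Q))"
    using finite_qF finite_qV by (simp add: card_cartesian_product card_Pow power_add)
  finally show "card bstate_space \<le> 2 ^ (card (qF Q) + card (qV Q))" .
qed

lemma finite_pg_nodes: "finite N"
  using finite_bstate_space pg_nodes_subset_bstate_space by (rule finite_subset[rotated])

lemma card_pg_nodes_less_Tmax: "card N < Tmax Q"
proof -
  have "card N \<le> card bstate_space"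
    using finite_bstate_space pg_nodes_subset_bstate_space by (rule card_mono)
  then show ?thesis using card_bstate_space by (simp add: Tmax_def)
qed

lemma td_init_in_pg_nodes: "td_init Q \<in> N"
  by (simp add: pg_nodes_def)

lemma pg_nodes_rtrancl_closed: "b \<in> N \<Longrightarrow> (b, b') \<in> R\<^sup>* \<Longrightarrow> b' \<in> N"
  by (auto simp: pg_nodes_def)

lemma pg_edgesD: "(b, b') \<in> E \<Longrightarrow> b \<in> N \<and> b' \<in> N \<and> (b, b') \<in> R"
  by (auto simp: pg_edges_def pg_nodes_def)

lemma pg_edges_subset: "E \<subseteq> R"
  by (auto simp: pg_edges_def)

lemma walk_from_init_in_pg_nodes:
  assumes "p 0 = td_init Q" and "\<forall>i<n. (p i, p (Suc i)) \<in> R" and "i \<le> n"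
  shows "p i \<in> N"
  using walk_rtrancl[OF assms(2), of 0 i] assms by (simp add: pg_nodes_def)

lemma pg_node_walkE:
  assumes "b \<in> N"
  obtains w n where "w 0 = td_init Q" and "w n = b" and "\<forall>i<n. (w i, w (Suc i)) \<in> R"
proof -
  have "(td_init Q, b) \<in> R\<^sup>*" using assms by (simp add: pg_nodes_def)
  then show thesis using that by (rule rtrancl_walkE)
qed

lemma holds_q_iff_holds_b:
  "lit_over (qF Q) (qV Q) l \<Longrightarrow> \<forall>X. snd s X \<ge> 0 \<Longrightarrow> holds_q s l = holds_b (bar Q s) l"
  by (cases s; cases l) (auto simp: bar_def lit_over_def order_less_le)

lemma q_goal_iff_td_goal: "\<forall>X. snd s X \<ge> 0 \<Longrightarrow> q_goal Q s = td_goal Q (bar Q s)"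
  using wf holds_q_iff_holds_b unfolding q_goal_def td_goal_def wf_qnp_def by blast

lemma q_app_iff_td_app: "\<forall>X. snd s X \<ge> 0 \<Longrightarrow> q_app Q a s = td_app Q a (bar Q s)"
  using holds_q_iff_holds_b wf_action(1) unfolding q_app_def td_app_def by blast

text \<open>A path of the policy graph is realized by a 1-trajectory by letting the value of a
  positive X be one more than the number of decrements X still has to absorb before it is next
  increased or decremented to 0, plus K + 2 times the number of increments so far: as long as
  every variable settles within K steps, each decrement lowers the value by at least 1 and
  each increment raises it by at least 1. The predicate ok marks the steps of p that are taken,
  so that finite paths are covered too.\<close>

definition path_action :: "(nat \<Rightarrow> ('f,'v) bstate) \<Rightarrow> nat \<Rightarrow> 'a" where
  "path_action p i = the (\<pi> (p i))"

definition dec_stays_pos :: "(nat \<Rightarrow> ('f,'v) bstate) \<Rightarrow> (nat \<Rightarrow> bool) \<Rightarrow> 'v \<Rightarrow> nat \<Rightarrow> bool" where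
  "dec_stays_pos p ok X i \<longleftrightarrow>
     ok i \<and> qN Q (path_action p i) X = Some Dec \<and> \<not> snd (p (Suc i)) X"

definition resets :: "(nat \<Rightarrow> ('f,'v) bstate) \<Rightarrow> (nat \<Rightarrow> bool) \<Rightarrow> 'v \<Rightarrow> nat \<Rightarrow> bool" where
  "resets p ok X i \<longleftrightarrow>
     ok i \<and> (qN Q (path_action p i) X = Some Inc
             \<or> qN Q (path_action p i) X = Some Dec \<and> snd (p (Suc i)) X)"

definition settled :: "(nat \<Rightarrow> ('f,'v) bstate) \<Rightarrow> (nat \<Rightarrow> bool) \<Rightarrow> 'v \<Rightarrow> nat \<Rightarrow> bool" where
  "settled p ok X k \<longleftrightarrow> resets p ok X k \<or> (\<forall>j\<ge>k. \<not> dec_stays_pos p ok X j)"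

definition settles_within :: "(nat \<Rightarrow> ('f,'v) bstate) \<Rightarrow> (nat \<Rightarrow> bool) \<Rightarrow> nat \<Rightarrow> bool" where
  "settles_within p ok K \<longleftrightarrow> (\<forall>X i. \<exists>k. i \<le> k \<and> k \<le> i + K \<and> settled p ok X k)"

definition next_settled :: "(nat \<Rightarrow> ('f,'v) bstate) \<Rightarrow> (nat \<Rightarrow> bool) \<Rightarrow> 'v \<Rightarrow> nat \<Rightarrow> nat" where
  "next_settled p ok X i = (LEAST k. i \<le> k \<and> settled p ok X k)"

definition pending_decs :: "(nat \<Rightarrow> ('f,'v) bstate) \<Rightarrow> (nat \<Rightarrow> bool) \<Rightarrow> 'v \<Rightarrow> nat \<Rightarrow> nat" where
  "pending_decs p ok X i =
     card {j. i \<le> j \<and> j < next_settled p ok X i \<and> dec_stays_pos p ok X j}"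

definition inc_count :: "(nat \<Rightarrow> ('f,'v) bstate) \<Rightarrow> (nat \<Rightarrow> bool) \<Rightarrow> 'v \<Rightarrow> nat \<Rightarrow> nat" where
  "inc_count p ok X i = card {j. j < i \<and> ok j \<and> qN Q (path_action p j) X = Some Inc}"

definition path_value :: "(nat \<Rightarrow> ('f,'v) bstate) \<Rightarrow> (nat \<Rightarrow> bool) \<Rightarrow> nat \<Rightarrow> nat \<Rightarrow> 'v \<Rightarrow> real" where
  "path_value p ok K i X = (if snd (p i) X then 0
     else real (pending_decs p ok X i + 1 + (K + 2) * inc_count p ok X i))"

lemma pending_decs_le:
  assumes "settles_within p ok K"
  shows "pending_decs p ok X i \<le> K"
proof -
  obtain k where k: "i \<le> k" "k \<le> i + K" "settled p ok X k"
    using assms unfolding settles_within_def by blast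
  have "next_settled p ok X i \<le> k" unfolding next_settled_def using k by (intro Least_le) simp
  then have "{j. i \<le> j \<and> j < next_settled p ok X i \<and> dec_stays_pos p ok X j} \<subseteq> {i..<i + K}"
    using k by auto
  then have "pending_decs p ok X i \<le> card {i..<i + K}" unfolding pending_decs_def by (intro card_mono) auto
  then show ?thesis by simp
qed

lemma next_settled_eq_Suc:
  assumes "\<not> settled p ok X i"
  shows "next_settled p ok X i = next_settled p ok X (Suc i)"
proof -
  have "(\<lambda>k. i \<le> k \<and> settled p ok X k) = (\<lambda>k. Suc i \<le> k \<and> settled p ok X k)"
    using assms by (auto simp: le_Suc_eq intro!: ext) (metis le_antisym not_less_eq_eq)
  then show ?thesis unfolding next_settled_def by simp
qed

lemma pending_decs_Suc_eq:
  assumes "\<not> resets p ok X i" and "\<not> dec_stays_pos p ok X i"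
  shows "pending_decs p ok X (Suc i) = pending_decs p ok X i"
proof (cases "settled p ok X i")
  case True
  then have no_dec: "\<forall>j\<ge>i. \<not> dec_stays_pos p ok X j" using assms(1) by (simp add: settled_def)
  then have "pending_decs p ok X i = 0" "pending_decs p ok X (Suc i) = 0"
    unfolding pending_decs_def by auto
  then show ?thesis by simp
next
  case False
  have "{j. i \<le> j \<and> j < M \<and> dec_stays_pos p ok X j} = {j. Suc i \<le> j \<and> j < M \<and> dec_stays_pos p ok X j}"
    for M
    using assms(2) by (auto simp: le_Suc_eq) (metis le_antisym not_less_eq_eq)
  then show ?thesis using next_settled_eq_Suc[OF False] unfolding pending_decs_def by simp
qed

lemma pending_decs_Suc_dec:
  assumes "settles_within p ok K" and "dec_stays_pos p ok X i"
  shows "pending_decs p ok X i = Suc (pending_decs p ok X (Suc i))"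
proof -
  have not_settled: "\<not> settled p ok X i"
    using assms(2) by (auto simp: settled_def resets_def dec_stays_pos_def)
  have "\<exists>k. i \<le> k \<and> settled p ok X k" using assms(1) unfolding settles_within_def by blast
  then have "settled p ok X (next_settled p ok X i)" "i \<le> next_settled p ok X i"
    unfolding next_settled_def by (metis (mono_tags, lifting) LeastI_ex)+
  then have "i < next_settled p ok X i" using not_settled by (metis le_neq_implies_less)
  then have "{j. i \<le> j \<and> j < next_settled p ok X i \<and> dec_stays_pos p ok X j}
      = insert i {j. Suc i \<le> j \<and> j < next_settled p ok X (Suc i) \<and> dec_stays_pos p ok X j}"
    using assms(2) next_settled_eq_Suc[OF not_settled] by (auto simp: le_Suc_eq)
  then show ?thesis unfolding pending_decs_def by simp
qed

lemma inc_count_Suc: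
  "inc_count p ok X (Suc i) =
     inc_count p ok X i + (if ok i \<and> qN Q (path_action p i) X = Some Inc then 1 else 0)"
proof -
  have "{j. j < Suc i \<and> ok j \<and> qN Q (path_action p j) X = Some Inc}
     = {j. j < i \<and> ok j \<and> qN Q (path_action p j) X = Some Inc} \<union>
       (if ok i \<and> qN Q (path_action p i) X = Some Inc then {i} else {})"
    by (auto simp: less_Suc_eq)
  then show ?thesis unfolding inc_count_def by (auto simp: card_insert_if)
qed

lemma path_value_nonneg: "path_value p ok K i X \<ge> 0"
  by (simp add: path_value_def)

lemma path_value_eq_0_iff: "path_value p ok K i X = 0 \<longleftrightarrow> snd (p i) X"
proof -
  have "real (pending_decs p ok X i + 1 + (K + 2) * inc_count p ok X i) \<noteq> 0"
    by (simp only: of_nat_eq_0_iff)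
  then show ?thesis by (simp add: path_value_def)
qed

lemma path_value_None:
  assumes "path_action p i = a" and "qN Q a X = None" and "td_succ Q a (p i) (p (Suc i))"
  shows "path_value p ok K (Suc i) X = path_value p ok K i X"
proof -
  have "\<not> resets p ok X i" "\<not> dec_stays_pos p ok X i"
    using assms(1,2) by (auto simp: resets_def dec_stays_pos_def)
  then have "pending_decs p ok X (Suc i) = pending_decs p ok X i" by (rule pending_decs_Suc_eq)
  moreover have "inc_count p ok X (Suc i) = inc_count p ok X i"
    using inc_count_Suc[of p ok X i] assms(1,2) by simp
  moreover have "snd (p (Suc i)) X = snd (p i) X" using td_succ_None assms(2,3) by blast
  ultimately show ?thesis by (simp add: path_value_def)
qed

lemma path_value_Inc:
  assumes "settles_within p ok K" and "ok i" and "path_action p i = a"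
    and "qN Q a X = Some Inc" and "td_succ Q a (p i) (p (Suc i))"
  shows "path_value p ok K i X + 1 \<le> path_value p ok K (Suc i) X"
proof -
  let ?D = "pending_decs p ok X i" and ?I = "inc_count p ok X i"
  have "?D \<le> K" using assms(1) by (rule pending_decs_le)
  then have "?D + 1 + (K + 2) * ?I + 1 \<le> pending_decs p ok X (Suc i) + 1 + (K + 2) * Suc ?I"
    by simp
  moreover have "inc_count p ok X (Suc i) = Suc ?I" using inc_count_Suc[of p ok X i] assms(2-4) by simp
  moreover have "\<not> snd (p (Suc i)) X" using td_succ_Inc assms(4,5) by blast
  ultimately show ?thesis unfolding path_value_def by (simp only: of_nat_add of_nat_1 of_nat_le_iff) auto
qed

lemma path_value_Dec:
  assumes "settles_within p ok K" and "ok i" and "path_action p i = a"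
    and "qN Q a X = Some Dec" and "td_app Q a (p i)"
  shows "path_value p ok K (Suc i) X + 1 \<le> path_value p ok K i X"
proof -
  have pos: "\<not> snd (p i) X" using td_app_dec_pos assms(4,5) by blast
  show ?thesis
  proof (cases "snd (p (Suc i)) X")
    case True
    then show ?thesis using pos by (simp add: path_value_def)
  next
    case False
    then have "dec_stays_pos p ok X i" using assms(2-4) by (simp add: dec_stays_pos_def)
    then have "pending_decs p ok X i = Suc (pending_decs p ok X (Suc i))"
      using pending_decs_Suc_dec assms(1) by blast
    moreover have "inc_count p ok X (Suc i) = inc_count p ok X i"
      using inc_count_Suc[of p ok X i] assms(3,4) by simp
    ultimately show ?thesis using pos False by (simp add: path_value_def)
  qed
qed

lemma path_value_step:
  assumes "settles_within p ok K" and "ok i" and "path_action p i = a"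
    and "td_app Q a (p i)" and "td_succ Q a (p i) (p (Suc i))"
  defines "x \<equiv> path_value p ok K i" and "x' \<equiv> path_value p ok K (Suc i)"
  shows "(case qN Q a X of Some Inc \<Rightarrow> x' X > x X
            | Some Dec \<Rightarrow> x' X < x X \<and> x' X \<ge> 0 | None \<Rightarrow> x' X = x X)
         \<and> (x' X \<noteq> x X \<longrightarrow> \<bar>x' X - x X\<bar> \<ge> 1)"
proof (cases "qN Q a X")
  case None
  then show ?thesis using path_value_None[OF assms(3) _ assms(5)] by (simp add: x_def x'_def)
next
  case (Some e)
  then show ?thesis
    using path_value_Inc[OF assms(1-3) _ assms(5), of X] path_value_Dec[OF assms(1-3) _ assms(4), of X]
      path_value_nonneg[of p ok K "Suc i" X]
    by (cases e) (auto simp: x_def x'_def)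
qed

lemma boolean_path_realizable:
  assumes init: "p 0 = td_init Q" and nodes: "\<forall>i. p i \<in> N"
    and steps: "\<forall>i. ok i \<longrightarrow> (p i, p (Suc i)) \<in> R" and settles: "settles_within p ok K"
  obtains f where "q_init Q (f 0)" and "\<forall>i. ok i \<longrightarrow> q_step Q \<pi> 1 (f i) (f (Suc i))"
    and "\<forall>i. bar Q (f i) = p i" and "\<forall>i X. snd (f i) X \<ge> 0"
proof -
  define f where "f i = (fst (p i), path_value p ok K i)" for i
  have nonneg: "\<forall>i X. snd (f i) X \<ge> 0" by (simp add: f_def path_value_nonneg)
  have bar_f: "bar Q (f i) = p i" for i
  proof -
    have "p i \<in> bstate_space" using nodes pg_nodes_subset_bstate_space by blast
    then have "(\<lambda>X. X \<in> qV Q \<and> snd (p i) X) = snd (p i)" by (auto simp: bstate_space_def)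
    then show ?thesis by (simp add: bar_def f_def path_value_eq_0_iff prod_eq_iff)
  qed
  have "q_init Q (f 0)"
    unfolding q_init_def using nonneg by (simp add: f_def init path_value_eq_0_iff td_init_def)
  moreover have "q_step Q \<pi> 1 (f i) (f (Suc i))" if ok: "ok i" for i
  proof -
    obtain a where a: "\<pi> (p i) = Some a" "td_app Q a (p i)" "td_succ Q a (p i) (p (Suc i))"
      using steps ok by (auto simp: pg_rel_def)
    have act: "path_action p i = a" using a(1) by (simp add: path_action_def)
    let ?x = "snd (f i)" and ?x' = "snd (f (Suc i))"
    have var: "(case qN Q a X of Some Inc \<Rightarrow> ?x' X > ?x X
                | Some Dec \<Rightarrow> ?x' X < ?x X \<and> ?x' X \<ge> 0 | None \<Rightarrow> ?x' X = ?x X)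
           \<and> (?x' X \<noteq> ?x X \<longrightarrow> \<bar>?x' X - ?x X\<bar> \<ge> 1)" for X
      using path_value_step[OF settles ok act a(2,3), of X] unfolding f_def snd_conv .
    have "fst (f (Suc i)) = apply_eff (qEff Q a) (fst (f i))"
      using a(3) by (simp add: td_succ_def f_def)
    then have "q_succ Q a (f i) (f (Suc i))" unfolding q_succ_def using var by blast
    moreover have "eps_ok 1 (snd (f i)) (snd (f (Suc i)))" unfolding eps_ok_def using var by blast
    moreover have "q_app Q a (f i)" using q_app_iff_td_app[of "f i" a] nonneg bar_f a(2) by simp
    ultimately show ?thesis unfolding q_step_def using bar_f a(1) by auto
  qed
  ultimately show thesis using that bar_f nonneg by blast
qed

lemma eventually_periodic_path_settles:
  assumes "0 < L" and periodic: "\<forall>i. p (P + i) = w (i mod L)"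
    and defined: "\<forall>t<L. \<pi> (w t) \<noteq> None"
    and inc: "\<forall>X. (\<exists>t<L. is_dec Q \<pi> (w t) X) \<longrightarrow> (\<exists>t<L. is_inc Q \<pi> (w t) X)"
  shows "settles_within p (\<lambda>_. True) (P + L)"
  unfolding settles_within_def
proof (intro allI)
  fix X i
  have at_cycle: "p j = w ((j - P) mod L)" if "P \<le> j" for j
    using periodic[rule_format, of "j - P"] that by simp
  show "\<exists>k. i \<le> k \<and> k \<le> i + (P + L) \<and> settled p (\<lambda>_. True) X k"
  proof (cases "\<exists>t<L. is_dec Q \<pi> (w t) X")
    case True
    then obtain t a where t: "t < L" "\<pi> (w t) = Some a" "qN Q a X = Some Inc"
      using inc by (auto simp: is_inc_def)
    obtain k where k: "max i P - P \<le> k" "k < max i P - P + L" "k mod L = t"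
      using mod_eq_in_window[OF t(1)] by blast
    have "p (P + k) = w t" using at_cycle[of "P + k"] k(3) by simp
    then have "resets p (\<lambda>_. True) X (P + k)" using t by (simp add: resets_def path_action_def)
    then show ?thesis using k by (intro exI[of _ "P + k"]) (auto simp: settled_def)
  next
    case False
    have "\<not> dec_stays_pos p (\<lambda>_. True) X j" if "max i P \<le> j" for j
    proof
      assume "dec_stays_pos p (\<lambda>_. True) X j"
      moreover have "p j = w ((j - P) mod L)" "(j - P) mod L < L" using at_cycle that assms(1) by auto
      ultimately show False
        using False defined by (auto simp: dec_stays_pos_def path_action_def is_dec_def)
    qed
    then show ?thesis by (intro exI[of _ "max i P"]) (auto simp: settled_def)
  qed
qed

lemma settles_within_if_no_dec_from:
  assumes "\<forall>X j. n \<le> j \<longrightarrow> \<not> dec_stays_pos p ok X j"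
  shows "settles_within p ok n"
  unfolding settles_within_def settled_def
proof (intro allI)
  fix X i
  show "\<exists>k. i \<le> k \<and> k \<le> i + n \<and> (resets p ok X k \<or> (\<forall>j\<ge>k. \<not> dec_stays_pos p ok X j))"
    using assms by (intro exI[of _ "max i n"]) auto
qed

end

section \<open>Policies solving the QNP\<close>

locale solving_policy = qnp_policy Q \<pi> for Q :: "('f,'v,'a) qnp" and \<pi> +
  assumes solves: "solves Q \<pi>"
begin

lemma solves_infinite:
  assumes "q_init Q (f 0)" and "\<forall>i. q_step Q \<pi> 1 (f i) (f (Suc i))"
  shows "\<exists>i. q_goal Q (f i)"
  using solves[unfolded solves_def, rule_format, OF zero_less_one, THEN conjunct1] assms by blast

lemma solves_finite:
  assumes "q_init Q (f 0)" and "\<forall>i<n. q_step Q \<pi> 1 (f i) (f (Suc i))"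
    and "\<forall>i\<le>n. \<not> q_goal Q (f i)"
  shows "\<exists>a. \<pi> (bar Q (f n)) = Some a \<and> q_app Q a (f n)"
  using solves[unfolded solves_def, rule_format, OF zero_less_one, THEN conjunct2] assms by blast

text \<open>Edges of the policy graph leave only non-goal states, so an infinite path is goal-free.\<close>
lemma no_settling_infinite_path:
  assumes init: "p 0 = td_init Q" and steps: "\<forall>i. (p i, p (Suc i)) \<in> R"
    and "settles_within p (\<lambda>_. True) K"
  shows False
proof -
  have nodes: "\<forall>i. p i \<in> N"
    using walk_from_init_in_pg_nodes[of p, OF init] steps by simp (meson order_refl)
  have "\<forall>i. True \<longrightarrow> (p i, p (Suc i)) \<in> R" using steps by simp
  then obtain f where f: "q_init Q (f 0)" "\<forall>i. True \<longrightarrow> q_step Q \<pi> 1 (f i) (f (Suc i))"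
    "\<forall>i. bar Q (f i) = p i" "\<forall>i X. snd (f i) X \<ge> 0"
    by (rule boolean_path_realizable[OF init nodes _ assms(3)])
  obtain i where "q_goal Q (f i)" using solves_infinite f(1,2) by auto
  then have "td_goal Q (p i)" using q_goal_iff_td_goal f(3,4) by metis
  with steps show False by (simp add: pg_rel_def)
qed

lemma pg_node_applicable:
  assumes "b \<in> N" and "\<not> td_goal Q b"
  shows "\<exists>a. \<pi> b = Some a \<and> td_app Q a b"
proof -
  obtain w n where w: "w 0 = td_init Q" "w n = b" "\<forall>i<n. (w i, w (Suc i)) \<in> R"
    using assms(1) by (rule pg_node_walkE)
  define p where "p i = w (min i n)" for i
  have steps: "\<forall>i. i < n \<longrightarrow> (p i, p (Suc i)) \<in> R" using w(3) by (simp add: p_def)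
  have settles: "settles_within p (\<lambda>i. i < n) n"
    by (rule settles_within_if_no_dec_from) (simp add: dec_stays_pos_def)
  have nodes: "\<forall>i. p i \<in> N" using walk_from_init_in_pg_nodes[OF w(1,3)] by (simp add: p_def)
  have init: "p 0 = td_init Q" using w(1) by (simp add: p_def)
  obtain f where f: "q_init Q (f 0)" "\<forall>i. i < n \<longrightarrow> q_step Q \<pi> 1 (f i) (f (Suc i))"
    "\<forall>i. bar Q (f i) = p i" "\<forall>i X. snd (f i) X \<ge> 0"
    by (rule boolean_path_realizable[OF init nodes steps settles])
  have "\<not> q_goal Q (f i)" if "i \<le> n" for i
  proof (cases "i < n")
    case True
    then have "\<not> td_goal Q (p i)" using steps by (auto simp: pg_rel_def)
    then show ?thesis using q_goal_iff_td_goal f(3,4) by simp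
  next
    case False
    then have "p i = b" using that w(2) by (simp add: p_def)
    then show ?thesis using q_goal_iff_td_goal f(3,4) assms(2) by simp
  qed
  then obtain a where "\<pi> (bar Q (f n)) = Some a" "q_app Q a (f n)"
    using solves_finite[OF f(1,2)] by blast
  moreover have "bar Q (f n) = b" using f(3) w(2) by (simp add: p_def)
  ultimately show ?thesis using q_app_iff_td_app f(4) by metis
qed

definition zeroing_succ :: "('f,'v) bstate \<Rightarrow> ('f,'v) bstate" where
  "zeroing_succ b = (apply_eff (qEff Q (the (\<pi> b))) (fst b),
     \<lambda>X. case qN Q (the (\<pi> b)) X of Some Inc \<Rightarrow> False | Some Dec \<Rightarrow> True | None \<Rightarrow> snd b X)"

lemma zeroing_succ_in_pg_rel:
  assumes "b \<in> N" and "\<not> td_goal Q b"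
  shows "(b, zeroing_succ b) \<in> R"
proof -
  obtain a where a: "\<pi> b = Some a" "td_app Q a b" using pg_node_applicable assms by blast
  then have "td_succ Q a b (zeroing_succ b)"
    unfolding td_succ_def zeroing_succ_def by (auto split: option.splits neff.splits)
  then show ?thesis using a assms by (auto simp: pg_rel_def)
qed

text \<open>Otherwise iterating the zeroing successor from b gives an infinite path on which no
  decrement leaves its variable positive.\<close>
lemma pg_node_reaches_goal:
  assumes "b \<in> N"
  shows "\<exists>g. (b, g) \<in> R\<^sup>* \<and> td_goal Q g"
proof (rule ccontr)
  assume no_goal: "\<not> ?thesis"
  obtain w P where w: "w 0 = td_init Q" "w P = b" "\<forall>i<P. (w i, w (Suc i)) \<in> R"
    using assms by (rule pg_node_walkE)
  define q where "q i = (zeroing_succ ^^ i) b" for i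
  have step_if_reached: "(x, zeroing_succ x) \<in> R" if "(b, x) \<in> R\<^sup>*" for x
  proof (rule zeroing_succ_in_pg_rel)
    show "x \<in> N" using pg_nodes_rtrancl_closed[OF assms that] .
    show "\<not> td_goal Q x" using no_goal that by blast
  qed
  have "(b, q i) \<in> R\<^sup>*" for i
    by (induction i) (auto simp: q_def intro: rtrancl_into_rtrancl step_if_reached)
  then have "\<forall>i. (q i, q (Suc i)) \<in> R" using step_if_reached by (simp add: q_def)
  moreover have "w P = q 0" using w(2) by (simp add: q_def)
  ultimately obtain p where p: "\<forall>i. (p i, p (Suc i)) \<in> R" "\<forall>i\<le>P. p i = w i" "\<forall>i. p (P + i) = q i"
    using walk_then_path[OF w(3)] by blast
  have "\<not> dec_stays_pos p (\<lambda>_. True) X j" if "P \<le> j" for X j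
  proof -
    obtain k where "j = P + k" using le_Suc_ex[OF \<open>P \<le> j\<close>] by blast
    then have "p (Suc j) = zeroing_succ (p j)" using p(3) by (simp add: q_def flip: add_Suc_right)
    then show ?thesis by (simp add: dec_stays_pos_def path_action_def zeroing_succ_def)
  qed
  then have "settles_within p (\<lambda>_. True) P" by (blast intro: settles_within_if_no_dec_from)
  moreover have "p 0 = td_init Q" using p(2) w(1) by simp
  ultimately show False using no_settling_infinite_path p(1) by blast
qed

end

section \<open>Soundness of the Sieve\<close>

locale sieve = solving_policy Q \<pi> for Q :: "('f,'v,'a) qnp" and \<pi> +
  fixes run :: "('f,'v) sieve_run"
  assumes sieve_run: "sieve_run Q \<pi> run"
begin

abbreviation "len \<equiv> length run"
abbreviation "Ek \<equiv> sieve_edges Q \<pi> run"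
abbreviation "chosen_comp k \<equiv> fst (run ! k)"
abbreviation "chosen_var k \<equiv> snd (run ! k)"

lemma sieve_choice_at: "k < len \<Longrightarrow> sieve_choice Q \<pi> run k (chosen_comp k) (chosen_var k)"
  using sieve_run by (simp add: sieve_run_def)

lemma no_sieve_choice_at_end: "\<not> sieve_choice Q \<pi> run len C X"
  using sieve_run by (simp add: sieve_run_def)

lemma sieve_edges_0: "Ek 0 = E"
  by (simp add: sieve_edges_def)

lemma sieve_edges_Suc:
  "Ek (Suc k) = Ek k - {(b, b'). b \<in> chosen_comp k \<and> b' \<in> chosen_comp k \<and> is_dec Q \<pi> b (chosen_var k)}"
  by (auto simp: sieve_edges_def less_Suc_eq)

lemma sieve_edges_antimono: "k \<le> k' \<Longrightarrow> Ek k' \<subseteq> Ek k"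
  by (auto simp: sieve_edges_def)

lemma sieve_edges_subset: "Ek k \<subseteq> E"
  using sieve_edges_antimono[of 0 k] sieve_edges_0 by simp

lemma sieve_edges_not_cut:
  "(u, v) \<in> Ek k \<Longrightarrow> j < k \<Longrightarrow> u \<in> chosen_comp j \<Longrightarrow> v \<in> chosen_comp j
    \<Longrightarrow> \<not> is_dec Q \<pi> u (chosen_var j)"
  by (auto simp: sieve_edges_def)

lemma sieve_edgesD: "(x, y) \<in> Ek k \<Longrightarrow> (x, y) \<in> R \<and> x \<in> N \<and> y \<in> N"
  using sieve_edges_subset pg_edgesD by blast

lemma sieve_edges_rtrancl_closed: "(x, y) \<in> (Ek k)\<^sup>* \<Longrightarrow> x \<in> N \<Longrightarrow> y \<in> N"
  by (induction rule: rtrancl_induct) (auto dest: sieve_edgesD)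

lemma chosen_comp_eq_scc_of: "k < len \<Longrightarrow> b \<in> chosen_comp k \<Longrightarrow> chosen_comp k = scc_of N (Ek k) b"
  using sieve_choice_at[of k] is_scc_eq_scc_of[of N "Ek k" "chosen_comp k" b]
  by (simp add: sieve_choice_def)

lemma chosen_comps_nested:
  "j \<le> k \<Longrightarrow> k < len \<Longrightarrow> b \<in> chosen_comp j \<Longrightarrow> b \<in> chosen_comp k
    \<Longrightarrow> chosen_comp k \<subseteq> chosen_comp j"
  using chosen_comp_eq_scc_of[of k b] chosen_comp_eq_scc_of[of j b]
    scc_of_mono[OF sieve_edges_antimono[of j k]] by simp

lemma chosen_var_in_qV: "k < len \<Longrightarrow> chosen_var k \<in> qV Q"
  using sieve_choice_at wf_action(3)[OF policy_action]
  by (fastforce simp: sieve_choice_def is_dec_def)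

lemma set_stack: "set (stack run b) = {chosen_var k | k. k < len \<and> b \<in> chosen_comp k}"
  unfolding stack_def by (force simp: in_set_conv_nth split: prod.splits)

lemma stack_subset_qV: "set (stack run b) \<subseteq> qV Q"
  using set_stack chosen_var_in_qV by auto

lemma distinct_stack: "distinct (stack run b)"
  unfolding stack_def
proof (rule distinct_map_filter_nth, intro allI impI)
  fix i j assume ij: "i < j \<and> j < len \<and> (\<lambda>(C, X). b \<in> C) (run ! i) \<and> (\<lambda>(C, X). b \<in> C) (run ! j)"
  then have "chosen_comp j \<subseteq> chosen_comp i" using chosen_comps_nested[of i j b] by (auto split: prod.splits)
  then show "chosen_var i \<noteq> chosen_var j" using sieve_choice_at[of j] ij by (auto simp: sieve_choice_def)
qed

lemma length_stack_le: "length (stack run b) \<le> card (qV Q)"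
  using distinct_card[OF distinct_stack] card_mono[OF finite_qV stack_subset_qV] by simp

lemma stack_not_inc: "Y \<in> set (stack run b) \<Longrightarrow> \<not> is_inc Q \<pi> b Y"
  using set_stack sieve_choice_at by (fastforce simp: sieve_choice_def)

definition stack_upto :: "nat \<Rightarrow> ('f,'v) bstate \<Rightarrow> 'v list" where
  "stack_upto k b = map snd (filter (\<lambda>(C, X). b \<in> C) (take (Suc k) run))"

lemma prefix_stack_upto: "prefix (stack_upto k b) (stack run b)"
  unfolding stack_upto_def stack_def by (intro map_mono_prefix filter_mono_prefix take_is_prefix)

lemma stack_upto_cong:
  assumes "\<forall>j\<le>k. j < len \<longrightarrow> (b \<in> chosen_comp j \<longleftrightarrow> b' \<in> chosen_comp j)"
  shows "stack_upto k b = stack_upto k b'"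
proof -
  have "(\<lambda>(C, X). b \<in> C) x = (\<lambda>(C, X). b' \<in> C) x" if x: "x \<in> set (take (Suc k) run)" for x
  proof -
    obtain j where "j < length (take (Suc k) run)" "take (Suc k) run ! j = x"
      using x by (metis in_set_conv_nth)
    then have "j \<le> k" "j < len" "x = run ! j" by auto
    then show ?thesis using assms by (auto split: prod.splits)
  qed
  then show ?thesis unfolding stack_upto_def by (metis (no_types, lifting) filter_cong)
qed

lemma stack_upto_snoc: "k < len \<Longrightarrow> b \<in> chosen_comp k \<Longrightarrow> \<exists>ys. stack_upto k b = ys @ [chosen_var k]"
  unfolding stack_upto_def by (cases "run ! k") (simp add: take_Suc_conv_app_nth)

lemma stack_upto_eq_if_connected:
  assumes "k < len" and "x \<in> N" and "y \<in> N" and "(x, y) \<in> (Ek k)\<^sup>*" and "(y, x) \<in> (Ek k)\<^sup>*"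
  shows "stack_upto k x = stack_upto k y"
proof (rule stack_upto_cong, intro allI impI)
  fix j assume "j \<le> k" "j < len"
  then have "(x, y) \<in> (Ek j)\<^sup>*" "(y, x) \<in> (Ek j)\<^sup>*"
    using assms(4,5) rtrancl_mono[OF sieve_edges_antimono] by blast+
  then show "x \<in> chosen_comp j \<longleftrightarrow> y \<in> chosen_comp j"
    using chosen_comp_eq_scc_of[OF \<open>j < len\<close>, of x] chosen_comp_eq_scc_of[OF \<open>j < len\<close>, of y]
      assms(2,3) unfolding scc_of_def by blast
qed

text \<open>Otherwise the Sieve could still choose X for this component: an earlier choice of X for
  a component containing it would have cut the edges leaving u.\<close>
lemma final_scc_dec_has_inc:
  assumes "b \<in> N" and cyc: "(b, b) \<in> (Ek len)\<^sup>+"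
    and u: "u \<in> scc_of N (Ek len) b" and dec: "is_dec Q \<pi> u X"
  shows "\<exists>s\<in>scc_of N (Ek len) b. is_inc Q \<pi> s X"
proof (rule ccontr)
  let ?S = "scc_of N (Ek len) b"
  assume no_inc: "\<not> ?thesis"
  have "is_scc N (Ek len) ?S" using assms(1) by (rule is_scc_scc_of)
  then obtain j where j: "j < len" "?S \<subseteq> chosen_comp j" "chosen_var j = X"
    using no_sieve_choice_at_end[of ?S X] u dec no_inc unfolding sieve_choice_def by blast
  have "Range (Ek len) \<subseteq> N" using sieve_edgesD by blast
  then obtain v where "v \<in> ?S" "(u, v) \<in> Ek len" using scc_of_successor[OF cyc u] by blast
  then show False using sieve_edges_not_cut[of u v len j] j u dec by blast
qed

lemma final_cycle_walk:
  assumes "b \<in> N" and cyc: "(b, b) \<in> (Ek len)\<^sup>+"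
  obtains w L where "0 < L" and "w 0 = b" and "w L = b" and "\<forall>i<L. (w i, w (Suc i)) \<in> Ek len"
    and "\<forall>X. (\<exists>t<L. is_dec Q \<pi> (w t) X) \<longrightarrow> (\<exists>t<L. is_inc Q \<pi> (w t) X)"
proof -
  let ?S = "scc_of N (Ek len) b"
  have fin: "finite ?S" using finite_pg_nodes by (simp add: scc_of_def)
  have conn: "\<forall>s\<in>?S. (b, s) \<in> (Ek len)\<^sup>* \<and> (s, b) \<in> (Ek len)\<^sup>*" by (simp add: scc_of_def)
  obtain w L where w: "0 < L" "w 0 = b" "w L = b" "\<forall>i<L. (w i, w (Suc i)) \<in> Ek len"
    "?S \<subseteq> w ` {..L}"
    using closed_walk_through[OF fin conn cyc] by blast
  have on_walk: "w t \<in> ?S" if "t \<le> L" for t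
  proof -
    have "(b, w t) \<in> (Ek len)\<^sup>*" using walk_rtrancl[OF w(4), of 0 t] that w(2) by simp
    moreover have "(w t, b) \<in> (Ek len)\<^sup>*" using walk_rtrancl[OF w(4), of t L] that w(3) by simp
    moreover have "w t \<in> N" using sieve_edges_rtrancl_closed calculation(1) assms(1) by blast
    ultimately show ?thesis by (simp add: scc_of_def)
  qed
  have covered: "?S \<subseteq> w ` {..<L}"
  proof
    fix s assume "s \<in> ?S"
    then obtain t where "t \<le> L" "s = w t" using w(5) by blast
    then show "s \<in> w ` {..<L}" using w(1-3) by (cases "t = L") auto
  qed
  have "\<exists>t<L. is_inc Q \<pi> (w t) X" if t: "t < L" and dec: "is_dec Q \<pi> (w t) X" for t X
  proof -
    obtain s where "s \<in> ?S" "is_inc Q \<pi> s X"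
      using final_scc_dec_has_inc[OF assms on_walk dec] t by auto
    then show ?thesis using covered by blast
  qed
  then show thesis using that w(1-4) by blast
qed

text \<open>The Sieve is sound: a cycle left in the final graph would yield a goal-free
  infinite trajectory, looping forever through the cycle.\<close>
lemma final_graph_acyclic:
  assumes "b \<in> N"
  shows "(b, b) \<notin> (Ek len)\<^sup>+"
proof
  assume cyc: "(b, b) \<in> (Ek len)\<^sup>+"
  obtain w L where w: "0 < L" "w 0 = b" "w L = b" "\<forall>i<L. (w i, w (Suc i)) \<in> Ek len"
    and inc: "\<forall>X. (\<exists>t<L. is_dec Q \<pi> (w t) X) \<longrightarrow> (\<exists>t<L. is_inc Q \<pi> (w t) X)"
    by (rule final_cycle_walk[OF assms cyc])
  have cyc_R: "\<forall>i<L. (w i, w (Suc i)) \<in> R" using w(4) sieve_edgesD by blast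
  obtain pre P where pre: "pre 0 = td_init Q" "pre P = b" "\<forall>i<P. (pre i, pre (Suc i)) \<in> R"
    using assms by (rule pg_node_walkE)
  have "\<forall>i. (w (i mod L), w (Suc i mod L)) \<in> R"
    using closed_walk_periodic[OF w(1) _ cyc_R] w(2,3) by simp
  moreover have "pre P = w (0 mod L)" using pre(2) w(2) by simp
  ultimately obtain p where p: "\<forall>i. (p i, p (Suc i)) \<in> R" "\<forall>i\<le>P. p i = pre i"
    "\<forall>i. p (P + i) = w (i mod L)"
    using walk_then_path[OF pre(3), of "\<lambda>i. w (i mod L)"] by auto
  have "\<forall>t<L. \<pi> (w t) \<noteq> None" using cyc_R by (auto simp: pg_rel_def)
  then have "settles_within p (\<lambda>_. True) (P + L)"
    using eventually_periodic_path_settles[OF w(1) p(3)] inc by blast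
  moreover have "p 0 = td_init Q" using p(2) pre(1) by simp
  ultimately show False using no_settling_infinite_path p(1) by blast
qed

lemma stack_has_dec:
  assumes "b \<in> N" and a: "\<pi> b = Some a" and dec: "qN Q a X = Some Dec"
  shows "\<exists>Y\<in>set (stack run b). qN Q a Y = Some Dec"
proof (rule ccontr)
  assume none: "\<not> ?thesis"
  have single: "scc_of N (Ek len) b = {b}"
    using scc_of_trivial[OF assms(1) final_graph_acyclic[OF assms(1)]] .
  have "sieve_choice Q \<pi> run len {b} X"
    unfolding sieve_choice_def
  proof (intro conjI)
    show "is_scc N (Ek len) {b}" using is_scc_scc_of[OF assms(1), of "Ek len"] single by simp
    show "\<exists>b'\<in>{b}. is_dec Q \<pi> b' X" using a dec by (simp add: is_dec_def)
    show "\<forall>b'\<in>{b}. \<not> is_inc Q \<pi> b' X" using a dec by (simp add: is_inc_def)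
    show "\<forall>j<len. {b} \<subseteq> chosen_comp j \<longrightarrow> chosen_var j \<noteq> X"
    proof (intro allI impI)
      fix j assume "j < len" "{b} \<subseteq> chosen_comp j"
      then have "chosen_var j \<in> set (stack run b)" using set_stack by auto
      then show "chosen_var j \<noteq> X" using none dec by blast
    qed
  qed
  then show False using no_sieve_choice_at_end by blast
qed

definition guarded_edges :: "'v list \<Rightarrow> (('f,'v) bstate \<times> ('f,'v) bstate) set" where
  "guarded_edges \<beta> =
     {(u, v) \<in> E. prefix \<beta> (stack run u) \<and> (\<forall>Y\<in>set \<beta>. \<not> is_dec Q \<pi> u Y)}"

lemma guarded_edges_subset: "guarded_edges \<beta> \<subseteq> E"
  by (auto simp: guarded_edges_def)

lemma sieve_first_cut:
  assumes "F \<subseteq> E" and "\<not> F \<subseteq> Ek len"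
  obtains k w w' where "k < len" and "F \<subseteq> Ek k" and "(w, w') \<in> F"
    and "w \<in> chosen_comp k" and "is_dec Q \<pi> w (chosen_var k)"
proof -
  define k0 where "k0 = (LEAST k. \<not> F \<subseteq> Ek k)"
  have not_sub: "\<not> F \<subseteq> Ek k0" unfolding k0_def using assms(2) by (rule LeastI)
  have "k0 \<le> len" unfolding k0_def using assms(2) by (rule Least_le)
  have "k0 \<noteq> 0" using not_sub assms(1) sieve_edges_0 by metis
  then obtain k where k: "k0 = Suc k" using not0_implies_Suc by blast
  have sub: "F \<subseteq> Ek k" using not_less_Least[of k "\<lambda>k. \<not> F \<subseteq> Ek k"] k unfolding k0_def by simp
  obtain w w' where ww: "(w, w') \<in> F" "(w, w') \<notin> Ek (Suc k)" using not_sub k by auto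
  then have "w \<in> chosen_comp k" "is_dec Q \<pi> w (chosen_var k)" using sub sieve_edges_Suc by auto
  moreover have "k < len" using \<open>k0 \<le> len\<close> k by simp
  ultimately show thesis using that sub ww(1) by blast
qed

text \<open>The first Sieve iteration that cuts an edge of the cycle chose a component containing
  the whole cycle, so the stacks of its nodes agree up to that iteration.\<close>
lemma guarded_cycle_cut:
  assumes uv: "(u, v) \<in> guarded_edges \<beta>" and vu: "(v, u) \<in> (guarded_edges \<beta>)\<^sup>*"
  obtains k w w' where "k < len" and "(w, w') \<in> guarded_edges \<beta>"
    and "w \<in> chosen_comp k" and "is_dec Q \<pi> w (chosen_var k)"
    and "stack_upto k u = stack_upto k w" and "stack_upto k v = stack_upto k w"
proof -
  let ?G = "guarded_edges \<beta>"
  define C where "C = {x. (u, x) \<in> ?G\<^sup>* \<and> (x, u) \<in> ?G\<^sup>*}"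
  have conn: "(u, x) \<in> (Restr ?G C)\<^sup>*" "(x, u) \<in> (Restr ?G C)\<^sup>*" if "x \<in> C" for x
    using rtrancl_Restr_scc[where r = ?G and u = u] that unfolding C_def by blast+
  have uN: "u \<in> N" using uv guarded_edges_subset pg_edgesD by blast
  have C_N: "x \<in> N" if "x \<in> C" for x
  proof -
    have "?G \<subseteq> R" using guarded_edges_subset pg_edges_subset by blast
    then have "(u, x) \<in> R\<^sup>*" using that rtrancl_mono unfolding C_def by blast
    then show ?thesis using uN pg_nodes_rtrancl_closed by blast
  qed
  have uC: "u \<in> C" and vC: "v \<in> C" using uv vu by (auto simp: C_def)
  have "(u, v) \<in> Restr ?G C" using uv uC vC by blast
  then have "(u, u) \<in> (Restr ?G C)\<^sup>+" using conn(2)[OF vC] by (rule rtrancl_into_trancl2)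
  then have not_final: "\<not> Restr ?G C \<subseteq> Ek len"
    using final_graph_acyclic[OF uN] by (blast dest: trancl_mono)
  have "Restr ?G C \<subseteq> E" using guarded_edges_subset by blast
  then obtain k w w' where k: "k < len" "Restr ?G C \<subseteq> Ek k" "(w, w') \<in> Restr ?G C"
    "w \<in> chosen_comp k" "is_dec Q \<pi> w (chosen_var k)"
    using not_final by (rule sieve_first_cut)
  have wC: "w \<in> C" using k(3) by blast
  have same: "stack_upto k x = stack_upto k w" if "x \<in> C" for x
  proof (rule stack_upto_eq_if_connected[OF k(1) C_N[OF that] C_N[OF wC]])
    have "(x, w) \<in> (Restr ?G C)\<^sup>*" "(w, x) \<in> (Restr ?G C)\<^sup>*"
      using conn that wC by (meson rtrancl_trans)+
    then show "(x, w) \<in> (Ek k)\<^sup>*" "(w, x) \<in> (Ek k)\<^sup>*" using rtrancl_mono[OF k(2)] by blast+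
  qed
  show thesis using that[OF k(1) _ k(4,5) same[OF uC] same[OF vC]] k(3) by blast
qed

text \<open>The variable chosen at that iteration is on the stacks of the cycle but not in \<beta>, as it
  is decremented along a guarded edge.\<close>
lemma guarded_cycle_keeps_prefix:
  assumes uv: "(u, v) \<in> guarded_edges \<beta>" and vu: "(v, u) \<in> (guarded_edges \<beta>)\<^sup>*"
    and pu: "prefix (\<beta> @ [X]) (stack run u)"
  shows "prefix (\<beta> @ [X]) (stack run v)"
proof -
  obtain k w w' where k: "k < len" "(w, w') \<in> guarded_edges \<beta>"
    "w \<in> chosen_comp k" "is_dec Q \<pi> w (chosen_var k)"
    and same: "stack_upto k u = stack_upto k w" "stack_upto k v = stack_upto k w"
    using guarded_cycle_cut[OF uv vu] by blast
  obtain ys where ys: "stack_upto k w = ys @ [chosen_var k]" using stack_upto_snoc k(1,3) by blast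
  have "chosen_var k \<notin> set \<beta>" "prefix \<beta> (stack run w)"
    using k(2,4) by (auto simp: guarded_edges_def)
  have "length \<beta> < length (stack_upto k w)"
  proof (rule ccontr)
    assume "\<not> ?thesis"
    then have "prefix (stack_upto k w) \<beta>"
      using prefix_length_prefix[OF prefix_stack_upto \<open>prefix \<beta> (stack run w)\<close>] by simp
    then have "chosen_var k \<in> set \<beta>" using ys set_mono_prefix by fastforce
    then show False using \<open>chosen_var k \<notin> set \<beta>\<close> by simp
  qed
  then have "prefix (\<beta> @ [X]) (stack_upto k u)"
    using prefix_length_prefix[OF pu prefix_stack_upto, of k] same(1) by simp
  then have "prefix (\<beta> @ [X]) (stack_upto k v)" using same by simp
  then show ?thesis using prefix_order.trans prefix_stack_upto by blast
qed

definition rank :: "'v list \<Rightarrow> ('f,'v) bstate \<Rightarrow> nat" where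
  "rank \<beta> b = card {w \<in> N. (w, b) \<in> (guarded_edges \<beta>)\<^sup>*}"

lemma rank_le_card: "rank \<beta> b \<le> card N"
  unfolding rank_def using finite_pg_nodes by (intro card_mono) auto

lemma rank_pos:
  assumes "b \<in> N"
  shows "0 < rank \<beta> b"
proof -
  have "finite {w \<in> N. (w, b) \<in> (guarded_edges \<beta>)\<^sup>*}" using finite_pg_nodes by simp
  moreover have "b \<in> {w \<in> N. (w, b) \<in> (guarded_edges \<beta>)\<^sup>*}" using assms by simp
  ultimately show ?thesis unfolding rank_def using card_gt_0_iff by blast
qed

lemma rank_mono: "(u, v) \<in> guarded_edges \<beta> \<Longrightarrow> rank \<beta> u \<le> rank \<beta> v"
  unfolding rank_def using finite_pg_nodes
  by (intro card_mono) (auto intro: rtrancl_into_rtrancl)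

lemma rank_strict_mono:
  assumes "(u, v) \<in> guarded_edges \<beta>" and "v \<in> N" and "(v, u) \<notin> (guarded_edges \<beta>)\<^sup>*"
  shows "rank \<beta> u < rank \<beta> v"
  unfolding rank_def using finite_pg_nodes assms
  by (intro psubset_card_mono) (auto intro: rtrancl_into_rtrancl)

end

section \<open>The policy \<pi>* on T(Q)\<close>

locale pistar_setting = sieve Q \<pi> run for Q :: "('f,'v,'a) qnp" and \<pi> and run +
  fixes sc :: "('f,'v) bstate \<Rightarrow> nat"
  assumes scc_indexing: "scc_indexing Q \<pi> sc"
begin

abbreviation "T \<equiv> t_rel Q (pistar Q \<pi> sc run)"

lemma sc_le_card: "b \<in> N \<Longrightarrow> sc b \<le> card N"
proof -
  assume "b \<in> N"
  obtain m where m: "sc ` N = {1..m}" using scc_indexing by (auto simp: scc_indexing_def Let_def)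
  then have "sc b \<le> m" using \<open>b \<in> N\<close> by auto
  also have "m = card (sc ` N)" using m by simp
  also have "\<dots> \<le> card N" using finite_pg_nodes by (rule card_image_le)
  finally show ?thesis .
qed

lemma sc_eq_if_cycle: "(b, b') \<in> E \<Longrightarrow> (b', b) \<in> E\<^sup>* \<Longrightarrow> sc b = sc b'"
  using scc_indexing pg_edgesD by (auto simp: scc_indexing_def Let_def)

text \<open>As ranks are at most |N| < Max, no counter ever blocks a push.\<close>
definition pistar_inv :: "('f,'v) tstate \<Rightarrow> bool" where
  "pistar_inv s = (case s of (b, c, cT, \<alpha>) \<Rightarrow> b \<in> N \<and> distinct \<alpha> \<and> set \<alpha> \<subseteq> qV Q \<and>
     (\<forall>d<length \<alpha>. c d \<le> rank (take d \<alpha>) b \<and>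
        ((\<not> prefix (take (Suc d) \<alpha>) (stack run b) \<or> cT < sc b) \<longrightarrow> c d = 0 \<or> c d < rank (take d \<alpha>) b)) \<and>
     (c (length \<alpha>) = 0 \<or> c (length \<alpha>) < rank \<alpha> b))"

lemma pistar_invD:
  assumes "pistar_inv (b, c, cT, \<alpha>)"
  shows "b \<in> N" and "distinct \<alpha>" and "set \<alpha> \<subseteq> qV Q" and "length \<alpha> \<le> card (qV Q)"
    and "c (length \<alpha>) < Tmax Q"
proof -
  show "b \<in> N" "distinct \<alpha>" "set \<alpha> \<subseteq> qV Q" using assms by (auto simp: pistar_inv_def)
  then show "length \<alpha> \<le> card (qV Q)" by (metis distinct_card card_mono finite_qV)
  have "c (length \<alpha>) = 0 \<or> c (length \<alpha>) < rank \<alpha> b" using assms by (simp add: pistar_inv_def)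
  then show "c (length \<alpha>) < Tmax Q"
    using rank_le_card[of \<alpha> b] card_pg_nodes_less_Tmax by linarith
qed

lemma pistar_inv_pop:
  assumes inv: "pistar_inv (b, c, cT, \<alpha>)" and "\<alpha> \<noteq> []"
    and pop: "cT < sc b \<or> \<not> prefix \<alpha> (stack run b)"
  shows "pistar_inv (b, c, cT, butlast \<alpha>)"
proof -
  have bt: "butlast \<alpha> = take (length \<alpha> - 1) \<alpha>" by (simp add: butlast_conv_take)
  have "take (Suc (length \<alpha> - 1)) \<alpha> = \<alpha>" using \<open>\<alpha> \<noteq> []\<close> by simp
  then have top: "c (length (butlast \<alpha>)) = 0 \<or> c (length (butlast \<alpha>)) < rank (butlast \<alpha>) b"
    using inv pop bt \<open>\<alpha> \<noteq> []\<close> unfolding pistar_inv_def by (auto dest: spec[of _ "length \<alpha> - 1"])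
  show ?thesis
    using inv top unfolding pistar_inv_def
    by (auto simp: distinct_butlast butlast_conv_take min_def dest: in_set_takeD)
qed

lemma pistar_inv_move: "pistar_inv (b, c, cT, []) \<Longrightarrow> pistar_inv (b, c, cT', [])"
  by (simp add: pistar_inv_def)

lemma pistar_inv_push:
  assumes inv: "pistar_inv (b, c, cT, \<alpha>)" and "\<not> cT < sc b"
    and push: "prefix (\<alpha> @ [X]) (stack run b)"
  shows "pistar_inv (b, c(length \<alpha> := Suc (c (length \<alpha>)), Suc (length \<alpha>) := 0), cT, \<alpha> @ [X])"
proof -
  have "distinct (\<alpha> @ [X])" using distinct_stack[of b] push by (auto simp: prefix_def)
  moreover have "set (\<alpha> @ [X]) \<subseteq> qV Q" using set_mono_prefix[OF push] stack_subset_qV by blast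
  moreover have "Suc (c (length \<alpha>)) \<le> rank \<alpha> b"
    using inv rank_pos[of b \<alpha>] by (auto simp: pistar_inv_def)
  ultimately show ?thesis
    using inv push \<open>\<not> cT < sc b\<close> unfolding pistar_inv_def by (auto simp: nth_append less_Suc_eq)
qed

text \<open>A step from b to b' cannot be undone inside the guarded graph when it either leaves
  the SCC of b, or loses the stack entry at depth d + 1.\<close>
lemma rank_strict_mono_step:
  assumes "(b, b') \<in> guarded_edges (take d (stack run b))" and d: "d < length (stack run b)"
    and "sc b \<le> cT" and lost: "\<not> prefix (take (Suc d) (stack run b)) (stack run b') \<or> cT < sc b'"
  shows "rank (take d (stack run b)) b < rank (take d (stack run b)) b'"
proof (rule rank_strict_mono[OF assms(1)])
  let ?G = "guarded_edges (take d (stack run b))"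
  have e: "(b, b') \<in> E" using assms(1) guarded_edges_subset by blast
  then show "b' \<in> N" using pg_edgesD by blast
  show "(b', b) \<notin> ?G\<^sup>*"
  proof
    assume return: "(b', b) \<in> ?G\<^sup>*"
    show False
    proof (cases "cT < sc b'")
      case True
      have "(b', b) \<in> E\<^sup>*" using return rtrancl_mono[OF guarded_edges_subset] by blast
      then show False using sc_eq_if_cycle[OF e] True \<open>sc b \<le> cT\<close> by simp
    next
      case False
      have tk: "take (Suc d) (stack run b) = take d (stack run b) @ [stack run b ! d]"
        using d by (simp add: take_Suc_conv_app_nth)
      then have "prefix (take d (stack run b) @ [stack run b ! d]) (stack run b)"
        by (metis take_is_prefix)
      then have "prefix (take (Suc d) (stack run b)) (stack run b')"
        using guarded_cycle_keeps_prefix[OF assms(1) return] tk by simp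
      then show False using lost False by simp
    qed
  qed
qed

lemma pistar_inv_act:
  assumes inv: "pistar_inv (b, c, cT, stack run b)" and "\<not> cT < sc b" and e: "(b, b') \<in> E"
    and counters: "\<forall>d\<le>length (stack run b). c' d = 0 \<or>
       c' d = c d \<and> (\<forall>Y\<in>set (take d (stack run b)). \<not> is_dec Q \<pi> b Y)"
  shows "pistar_inv (b', c', cT, stack run b)"
proof -
  let ?\<alpha> = "stack run b"
  have guarded: "(b, b') \<in> guarded_edges (take d ?\<alpha>)"
    if "c' d \<noteq> 0" "d \<le> length ?\<alpha>" for d
    using counters that e take_is_prefix by (auto simp: guarded_edges_def)
  have below: "c' d \<le> rank (take d ?\<alpha>) b' \<and>
      ((\<not> prefix (take (Suc d) ?\<alpha>) (stack run b') \<or> cT < sc b') \<longrightarrow>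
         c' d = 0 \<or> c' d < rank (take d ?\<alpha>) b')" if d: "d < length ?\<alpha>" for d
  proof (cases "c' d = 0")
    case False
    then have "c' d = c d" using counters[rule_format, of d] d by auto
    moreover have "c d \<le> rank (take d ?\<alpha>) b" using inv d by (simp add: pistar_inv_def)
    moreover note rank_mono[OF guarded[OF False]] d
      rank_strict_mono_step[OF guarded[OF False] d, where cT = cT] \<open>\<not> cT < sc b\<close>
    ultimately show ?thesis using d by (auto simp: not_less)
  qed simp
  have top: "c' (length ?\<alpha>) = 0 \<or> c' (length ?\<alpha>) < rank ?\<alpha> b'"
  proof (cases "c' (length ?\<alpha>) = 0")
    case False
    then have "c' (length ?\<alpha>) = c (length ?\<alpha>)" using counters[rule_format, of "length ?\<alpha>"] by auto
    moreover have "c (length ?\<alpha>) = 0 \<or> c (length ?\<alpha>) < rank ?\<alpha> b" using inv by (simp add: pistar_inv_def)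
    ultimately show ?thesis using rank_mono[OF guarded[OF False]] False by auto
  qed simp
  have "b' \<in> N" using e pg_edgesD by blast
  then show ?thesis using inv below top by (simp add: pistar_inv_def)
qed

text \<open>Depths are counted from 1 at the bottom of the stack, as in index(X, d).\<close>
definition shallowest_dec :: "'a \<Rightarrow> 'v list \<Rightarrow> 'v \<Rightarrow> nat \<Rightarrow> bool" where
  "shallowest_dec a \<alpha> X d \<longleftrightarrow> qN Q a X = Some Dec \<and> 1 \<le> d \<and> d \<le> length \<alpha> \<and> \<alpha> ! (d - 1) = X
       \<and> (\<forall>d'. 1 \<le> d' \<and> d' < d \<longrightarrow> qN Q a (\<alpha> ! (d' - 1)) \<noteq> Some Dec)"

lemma shallowest_dec_exists:
  assumes "b \<in> N" and "\<pi> b = Some a" and "decrements_some Q a"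
  shows "\<exists>X d. shallowest_dec a (stack run b) X d"
proof -
  let ?s = "stack run b"
  obtain X where "qN Q a X = Some Dec" using assms(3) by (auto simp: decrements_some_def)
  then obtain Y where "Y \<in> set ?s" "qN Q a Y = Some Dec" using stack_has_dec assms(1,2) by blast
  then have ex: "\<exists>j. j < length ?s \<and> qN Q a (?s ! j) = Some Dec" by (metis in_set_conv_nth)
  define j0 where "j0 = (LEAST j. j < length ?s \<and> qN Q a (?s ! j) = Some Dec)"
  have j0: "j0 < length ?s" "qN Q a (?s ! j0) = Some Dec"
    using LeastI_ex[OF ex] unfolding j0_def by auto
  have "qN Q a (?s ! j) \<noteq> Some Dec" if "j < j0" for j
    using not_less_Least[of j "\<lambda>j. j < length ?s \<and> qN Q a (?s ! j) = Some Dec"] that j0(1)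
    unfolding j0_def by auto
  then have "shallowest_dec a ?s (?s ! j0) (Suc j0)"
    unfolding shallowest_dec_def using j0 by (auto simp: Suc_le_eq)
  then show ?thesis by blast
qed

lemma shallowest_dec_someE:
  assumes "\<exists>X d. shallowest_dec a \<alpha> X d"
  obtains X d where "(SOME (X, d). shallowest_dec a \<alpha> X d) = (X, d)" and "shallowest_dec a \<alpha> X d"
proof -
  from assms have "\<exists>p. (\<lambda>(X, d). shallowest_dec a \<alpha> X d) p" by auto
  then have "(\<lambda>(X, d). shallowest_dec a \<alpha> X d) (SOME p. (\<lambda>(X, d). shallowest_dec a \<alpha> X d) p)"
    by (rule someI_ex)
  then show ?thesis using that by (cases "SOME p. (\<lambda>(X, d). shallowest_dec a \<alpha> X d) p") auto
qed

lemma shallowest_dec_counters: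
  assumes "shallowest_dec a \<alpha> X e" and "\<pi> b = Some a" and "length \<alpha> \<le> card (qV Q)"
  shows "\<forall>d\<le>length \<alpha>. (if e \<le> d \<and> d \<le> card (qV Q) then 0 else c d) = 0 \<or>
           (if e \<le> d \<and> d \<le> card (qV Q) then 0 else c d) = c d \<and> (\<forall>Y\<in>set (take d \<alpha>). \<not> is_dec Q \<pi> b Y)"
proof (intro allI impI)
  fix d assume "d \<le> length \<alpha>"
  have "\<not> is_dec Q \<pi> b Y" if shallow: "\<not> e \<le> d" and Y: "Y \<in> set (take d \<alpha>)" for Y
  proof -
    obtain j where "j < d" "\<alpha> ! j = Y" using Y by (auto simp: in_set_conv_nth)
    then have "qN Q a (\<alpha> ! (Suc j - 1)) \<noteq> Some Dec"
      using assms(1) shallow unfolding shallowest_dec_def by (metis Suc_leI le_less_trans not_le zero_less_Suc One_nat_def)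
    then show ?thesis using assms(2) \<open>\<alpha> ! j = Y\<close> by (auto simp: is_dec_def)
  qed
  then show "(if e \<le> d \<and> d \<le> card (qV Q) then 0 else c d) = 0 \<or>
      (if e \<le> d \<and> d \<le> card (qV Q) then 0 else c d) = c d \<and> (\<forall>Y\<in>set (take d \<alpha>). \<not> is_dec Q \<pi> b Y)"
    using \<open>d \<le> length \<alpha>\<close> assms(3) by auto
qed

lemma t_relI:
  "\<not> td_goal Q b \<Longrightarrow> pistar Q \<pi> sc run (b, c, cT, \<alpha>) = Some A \<Longrightarrow> t_app Q A (b, c, cT, \<alpha>)
    \<Longrightarrow> t_succ Q A (b, c, cT, \<alpha>) s' \<Longrightarrow> ((b, c, cT, \<alpha>), s') \<in> T"
  by (simp add: t_rel_def t_goal_def)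

lemma pistar_pop:
  "\<alpha> \<noteq> [] \<Longrightarrow> cT < sc b \<or> \<not> prefix \<alpha> (stack run b) \<Longrightarrow>
    pistar Q \<pi> sc run (b, c, cT, \<alpha>) = Some (Pop (last \<alpha>) (length \<alpha>))"
  by (cases "cT < sc b") simp_all

lemma pistar_move: "cT < sc b \<Longrightarrow> pistar Q \<pi> sc run (b, c, cT, []) = Some Move"
  by simp

lemma pistar_push:
  "\<not> cT < sc b \<Longrightarrow> prefix \<alpha> (stack run b) \<Longrightarrow> \<exists>X. prefix (\<alpha> @ [X]) (stack run b) \<Longrightarrow>
    pistar Q \<pi> sc run (b, c, cT, \<alpha>) = Some (Push (SOME X. prefix (\<alpha> @ [X]) (stack run b)) (length \<alpha>))"
  by simp

lemma pistar_no_action: "\<not> cT < sc b \<Longrightarrow> \<pi> b = None \<Longrightarrow> pistar Q \<pi> sc run (b, c, cT, stack run b) = None"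
  by simp

lemma pistar_act_branch:
  assumes "\<not> cT < sc b" and "\<pi> b = Some a"
  shows "pistar Q \<pi> sc run (b, c, cT, stack run b) =
    (if \<not> decrements_some Q a then Some (Act a)
     else if \<exists>X d. shallowest_dec a (stack run b) X d
       then Some (case SOME (X, d). shallowest_dec a (stack run b) X d of (X, d) \<Rightarrow> DAct a X d)
     else None)"
  unfolding shallowest_dec_def[abs_def] using assms by simp

declare pistar.simps [simp del]

lemma pistar_act_successor:
  assumes "b \<in> N" and "\<not> td_goal Q b" and "\<not> cT < sc b"
    and A: "pistar Q \<pi> sc run (b, c, cT, stack run b) = Some A"
    and app: "t_app Q A (b, c, cT, stack run b)" and succ: "t_succ Q A (b, c, cT, stack run b) s'"
  obtains b' c' where "(b, b') \<in> E"
    and "\<forall>d\<le>length (stack run b). c' d = 0 \<or>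
           c' d = c d \<and> (\<forall>Y\<in>set (take d (stack run b)). \<not> is_dec Q \<pi> b Y)"
    and "s' = (b', c', cT, stack run b)"
proof -
  let ?\<alpha> = "stack run b"
  obtain a where a: "\<pi> b = Some a"
    using A pistar_no_action[OF assms(3), of c] by (cases "\<pi> b") simp_all
  have edge: "(b, b') \<in> E" if "td_app Q a b" "td_succ Q a b b'" for b'
    using that a assms(1,2) by (auto simp: pg_edges_def pg_rel_def)
  show thesis
  proof (cases "decrements_some Q a")
    case False
    then have "A = Act a" using A pistar_act_branch[OF assms(3) a] by simp
    then obtain b' where "td_app Q a b" "td_succ Q a b b'" "s' = (b', c, cT, ?\<alpha>)"
      using app succ by auto
    moreover have "\<forall>d\<le>length ?\<alpha>. c d = 0 \<or> c d = c d \<and> (\<forall>Y\<in>set (take d ?\<alpha>). \<not> is_dec Q \<pi> b Y)"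
      using False a by (auto simp: is_dec_def decrements_some_def)
    ultimately show thesis using that[of b' c] edge by blast
  next
    case True
    have ex: "\<exists>X d. shallowest_dec a ?\<alpha> X d" using shallowest_dec_exists[OF assms(1) a True] .
    then obtain X e where Xe: "(SOME (X, d). shallowest_dec a ?\<alpha> X d) = (X, e)"
      "shallowest_dec a ?\<alpha> X e"
      by (rule shallowest_dec_someE)
    then have "A = DAct a X e" using A pistar_act_branch[OF assms(3) a] True ex by simp
    then obtain b' where "td_app Q a b" "td_succ Q a b b'"
      "s' = (b', \<lambda>d'. if e \<le> d' \<and> d' \<le> card (qV Q) then 0 else c d', cT, ?\<alpha>)"
      using app succ by auto
    then show thesis
      using that[of b' "\<lambda>d'. if e \<le> d' \<and> d' \<le> card (qV Q) then 0 else c d'"] edge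
        shallowest_dec_counters[OF Xe(2) a length_stack_le, of c]
      by blast
  qed
qed

lemma pistar_step_cases [consumes 2]:
  assumes step: "((b, c, cT, \<alpha>), s') \<in> T" and inv: "pistar_inv (b, c, cT, \<alpha>)"
  obtains (pop) "\<alpha> \<noteq> []" and "cT < sc b \<or> \<not> prefix \<alpha> (stack run b)"
      and "s' = (b, c, cT, butlast \<alpha>)"
  | (move) "\<alpha> = []" and "cT < sc b" and "s' = (b, c, Suc cT, [])"
  | (push) X where "\<not> cT < sc b" and "prefix (\<alpha> @ [X]) (stack run b)"
      and "s' = (b, c(length \<alpha> := Suc (c (length \<alpha>)), Suc (length \<alpha>) := 0), cT, \<alpha> @ [X])"
  | (act) b' c' where "\<not> cT < sc b" and "\<alpha> = stack run b" and "(b, b') \<in> E"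
      and "\<forall>d\<le>length \<alpha>. c' d = 0 \<or> c' d = c d \<and> (\<forall>Y\<in>set (take d \<alpha>). \<not> is_dec Q \<pi> b Y)"
      and "s' = (b', c', cT, \<alpha>)"
proof -
  obtain A where A: "\<not> td_goal Q b" "pistar Q \<pi> sc run (b, c, cT, \<alpha>) = Some A"
    "t_app Q A (b, c, cT, \<alpha>)" "t_succ Q A (b, c, cT, \<alpha>) s'"
    using step by (auto simp: t_rel_def t_goal_def)
  consider "\<alpha> \<noteq> []" "cT < sc b \<or> \<not> prefix \<alpha> (stack run b)" | "\<alpha> = []" "cT < sc b"
    | "\<not> cT < sc b" "prefix \<alpha> (stack run b)" "\<alpha> \<noteq> stack run b" | "\<not> cT < sc b" "\<alpha> = stack run b"
    by fastforce
  then show thesis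
  proof cases
    case 1
    then have "A = Pop (last \<alpha>) (length \<alpha>)" using A(2) pistar_pop by simp
    then show thesis using pop A(4) 1 by simp
  next
    case 2
    then have "A = Move" using A(2) pistar_move by simp
    then show thesis using move A(4) 2 by simp
  next
    case 3
    then have ex: "\<exists>X. prefix (\<alpha> @ [X]) (stack run b)" using prefix_snoc_if_strict by blast
    define X where "X = (SOME X. prefix (\<alpha> @ [X]) (stack run b))"
    have "prefix (\<alpha> @ [X]) (stack run b)" using ex unfolding X_def by (rule someI_ex)
    moreover have "A = Push X (length \<alpha>)" using A(2) pistar_push[OF 3(1,2) ex] X_def by simp
    ultimately show thesis using push[of X] A(4) 3(1) by simp
  next
    case 4
    obtain b' c' where "(b, b') \<in> E"
      "\<forall>d\<le>length (stack run b). c' d = 0 \<or>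
         c' d = c d \<and> (\<forall>Y\<in>set (take d (stack run b)). \<not> is_dec Q \<pi> b Y)"
      "s' = (b', c', cT, stack run b)"
      using pistar_act_successor[OF pistar_invD(1)[OF inv] A(1) 4(1)] A(2-4) 4(2) by blast
    then show thesis using act[of b' c'] 4 by simp
  qed
qed

lemma pistar_inv_step:
  assumes "pistar_inv s" and "(s, s') \<in> T"
  shows "pistar_inv s'"
proof -
  obtain b c cT \<alpha> where s: "s = (b, c, cT, \<alpha>)" by (cases s) auto
  have inv: "pistar_inv (b, c, cT, \<alpha>)" using assms(1) s by simp
  from assms(2)[unfolded s] inv show ?thesis
  proof (cases rule: pistar_step_cases)
    case pop
    then show ?thesis using pistar_inv_pop[OF inv] by simp
  next
    case move
    then show ?thesis using pistar_inv_move[OF inv[unfolded move(1)]] by simp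
  next
    case (push X)
    then show ?thesis using pistar_inv_push[OF inv] by simp
  next
    case (act b' c')
    then show ?thesis using pistar_inv_act[of b c cT b' c'] inv by simp
  qed
qed

lemma pistar_inv_rtrancl: "(s, s') \<in> T\<^sup>* \<Longrightarrow> pistar_inv s \<Longrightarrow> pistar_inv s'"
  by (induction rule: rtrancl_induct) (auto intro: pistar_inv_step)

lemma pistar_inv_init: "pistar_inv (t_init Q)"
  by (simp add: pistar_inv_def t_init_def td_init_in_pg_nodes)

lemma pistar_pop_step:
  assumes inv: "pistar_inv (b, c, cT, \<alpha> @ [x])" and "\<not> td_goal Q b"
    and "cT < sc b \<or> \<not> prefix (\<alpha> @ [x]) (stack run b)"
  shows "((b, c, cT, \<alpha> @ [x]), (b, c, cT, \<alpha>)) \<in> T"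
proof (rule t_relI[OF assms(2)])
  show "pistar Q \<pi> sc run (b, c, cT, \<alpha> @ [x]) = Some (Pop x (length (\<alpha> @ [x])))"
    using pistar_pop assms(3) by simp
  show "t_app Q (Pop x (length (\<alpha> @ [x]))) (b, c, cT, \<alpha> @ [x])"
    using pistar_invD[OF inv] by (auto simp: nth_append)
qed simp

lemma pistar_pops_to_empty:
  assumes "pistar_inv (b, c, cT, \<alpha>)" and "\<not> td_goal Q b" and "cT < sc b"
  shows "((b, c, cT, \<alpha>), (b, c, cT, [])) \<in> T\<^sup>*"
  using assms(1)
proof (induction \<alpha> rule: rev_induct)
  case (snoc x \<alpha>)
  have step: "((b, c, cT, \<alpha> @ [x]), (b, c, cT, \<alpha>)) \<in> T"
    using pistar_pop_step[OF snoc.prems assms(2)] assms(3) by blast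
  then have "pistar_inv (b, c, cT, \<alpha>)" using pistar_inv_step snoc.prems by blast
  then show ?case using snoc.IH step by (meson converse_rtrancl_into_rtrancl)
qed simp

lemma pistar_moves_into_scc:
  assumes "b \<in> N" and "\<not> td_goal Q b"
  shows "\<exists>cT'. ((b, c, cT, []), (b, c, cT', [])) \<in> T\<^sup>* \<and> \<not> cT' < sc b"
proof (induction "sc b - cT" arbitrary: cT)
  case 0
  then show ?case by auto
next
  case (Suc n)
  then have "cT < sc b" by simp
  moreover have "sc b < Tmax Q" using sc_le_card[OF assms(1)] card_pg_nodes_less_Tmax by simp
  ultimately have "((b, c, cT, []), (b, c, Suc cT, [])) \<in> T"
    using t_relI[OF assms(2), of c cT "[]" Move] pistar_move by simp
  moreover have "n = sc b - Suc cT" using Suc(2) by simp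
  then obtain cT' where "((b, c, Suc cT, []), (b, c, cT', [])) \<in> T\<^sup>*" "\<not> cT' < sc b"
    using Suc(1) by blast
  ultimately show ?case by (meson converse_rtrancl_into_rtrancl)
qed

lemma pistar_pops_to_stack_prefix:
  assumes "pistar_inv (b, c, cT, \<alpha>)" and "\<not> td_goal Q b" and "\<not> cT < sc b"
  shows "\<exists>\<alpha>'. prefix \<alpha>' (stack run b) \<and> ((b, c, cT, \<alpha>), (b, c, cT, \<alpha>')) \<in> T\<^sup>*"
  using assms(1)
proof (induction \<alpha> rule: rev_induct)
  case (snoc x \<alpha>)
  show ?case
  proof (cases "prefix (\<alpha> @ [x]) (stack run b)")
    case False
    then have step: "((b, c, cT, \<alpha> @ [x]), (b, c, cT, \<alpha>)) \<in> T"
      using pistar_pop_step[OF snoc.prems assms(2)] by blast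
    then have "pistar_inv (b, c, cT, \<alpha>)" using pistar_inv_step snoc.prems by blast
    then show ?thesis using snoc.IH step by (meson converse_rtrancl_into_rtrancl)
  qed blast
qed (intro exI[of _ "[]"], simp)

lemma pistar_pushes_stack:
  assumes "pistar_inv (b, c, cT, \<alpha>)" and "\<not> td_goal Q b" and "\<not> cT < sc b"
    and "prefix \<alpha> (stack run b)"
  shows "\<exists>c'. ((b, c, cT, \<alpha>), (b, c', cT, stack run b)) \<in> T\<^sup>*"
  using assms(1,4)
proof (induction "length (stack run b) - length \<alpha>" arbitrary: \<alpha> c)
  case 0
  then have "\<alpha> = stack run b" by (auto simp: prefix_def)
  then show ?case by auto
next
  case (Suc n)
  then have "\<alpha> \<noteq> stack run b" by auto
  then have ex: "\<exists>X. prefix (\<alpha> @ [X]) (stack run b)" using Suc(4) prefix_snoc_if_strict by blast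
  define X where "X = (SOME X. prefix (\<alpha> @ [X]) (stack run b))"
  have pX: "prefix (\<alpha> @ [X]) (stack run b)" using ex unfolding X_def by (rule someI_ex)
  let ?c = "c(length \<alpha> := Suc (c (length \<alpha>)), Suc (length \<alpha>) := 0)"
  have "length (\<alpha> @ [X]) \<le> card (qV Q)"
    using prefix_length_le[OF pX] length_stack_le[of b] by linarith
  moreover have "X \<in> qV Q" "X \<notin> set \<alpha>"
    using set_mono_prefix[OF pX] stack_subset_qV[of b] distinct_stack[of b] pX
    by (auto simp: prefix_def)
  ultimately have step: "((b, c, cT, \<alpha>), (b, ?c, cT, \<alpha> @ [X])) \<in> T"
    using t_relI[OF assms(2), of c cT \<alpha> "Push X (length \<alpha>)"] pistar_invD(5)[OF Suc(3)]
      pistar_push[OF assms(3) Suc(4) ex] X_def by simp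
  have "pistar_inv (b, ?c, cT, \<alpha> @ [X])" using pistar_inv_step[OF Suc(3) step] .
  moreover have "n = length (stack run b) - length (\<alpha> @ [X])" using Suc(2) by simp
  ultimately have "\<exists>c'. ((b, ?c, cT, \<alpha> @ [X]), (b, c', cT, stack run b)) \<in> T\<^sup>*"
    using Suc(1)[of "\<alpha> @ [X]" ?c] pX by simp
  then show ?case using step converse_rtrancl_into_rtrancl by fast
qed

lemma pistar_act_step:
  assumes "pistar_inv (b, c, cT, stack run b)" and "\<not> cT < sc b" and "\<not> td_goal Q b"
    and "(b, b') \<in> R"
  shows "\<exists>c'. ((b, c, cT, stack run b), (b', c', cT, stack run b)) \<in> T"
proof -
  let ?\<alpha> = "stack run b"
  obtain a where a: "\<pi> b = Some a" "td_app Q a b" "td_succ Q a b b'"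
    using assms(4) by (auto simp: pg_rel_def)
  have no_inc: "\<forall>Y. qN Q a Y = Some Inc \<longrightarrow> Y \<notin> set ?\<alpha>"
    using stack_not_inc[of _ b] a(1) by (auto simp: is_inc_def)
  show ?thesis
  proof (cases "decrements_some Q a")
    case False
    have "pistar Q \<pi> sc run (b, c, cT, ?\<alpha>) = Some (Act a)"
      using pistar_act_branch[OF assms(2) a(1)] False by simp
    moreover have "t_app Q (Act a) (b, c, cT, ?\<alpha>)" using False a(2) no_inc by simp
    moreover have "t_succ Q (Act a) (b, c, cT, ?\<alpha>) (b', c, cT, ?\<alpha>)"
      unfolding t_succ.simps using a(3) by blast
    ultimately show ?thesis using t_relI[OF assms(3)] by blast
  next
    case True
    have ex: "\<exists>X d. shallowest_dec a ?\<alpha> X d"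
      using shallowest_dec_exists[OF pistar_invD(1)[OF assms(1)] a(1) True] .
    then obtain X e where Xe: "(SOME (X, d). shallowest_dec a ?\<alpha> X d) = (X, e)"
      "shallowest_dec a ?\<alpha> X e"
      by (rule shallowest_dec_someE)
    have "pistar Q \<pi> sc run (b, c, cT, ?\<alpha>) = Some (DAct a X e)"
      using pistar_act_branch[OF assms(2) a(1)] True ex Xe(1) by simp
    moreover have "t_app Q (DAct a X e) (b, c, cT, ?\<alpha>)"
      using Xe(2) a(2) no_inc length_stack_le[of b] by (auto simp: shallowest_dec_def)
    moreover have "t_succ Q (DAct a X e) (b, c, cT, ?\<alpha>)
        (b', \<lambda>d'. if e \<le> d' \<and> d' \<le> card (qV Q) then 0 else c d', cT, ?\<alpha>)"
      unfolding t_succ.simps using a(3) by blast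
    ultimately show ?thesis using t_relI[OF assms(3)] by blast
  qed
qed

lemma pistar_simulates_pg_rel:
  assumes inv: "pistar_inv (b, c, cT, \<alpha>)" and "\<not> td_goal Q b" and "(b, b') \<in> R"
  shows "\<exists>s'. ((b, c, cT, \<alpha>), s') \<in> T\<^sup>* \<and> fst s' = b'"
proof -
  obtain cT1 \<alpha>1 where s1: "((b, c, cT, \<alpha>), (b, c, cT1, \<alpha>1)) \<in> T\<^sup>*" "\<not> cT1 < sc b"
  proof (cases "cT < sc b")
    case True
    then have "((b, c, cT, \<alpha>), (b, c, cT, [])) \<in> T\<^sup>*"
      using pistar_pops_to_empty[OF inv assms(2)] by blast
    moreover obtain cT' where "((b, c, cT, []), (b, c, cT', [])) \<in> T\<^sup>*" "\<not> cT' < sc b"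
      using pistar_moves_into_scc[OF pistar_invD(1)[OF inv] assms(2)] by blast
    ultimately show thesis using that by (meson rtrancl_trans)
  qed (use that in blast)
  have inv1: "pistar_inv (b, c, cT1, \<alpha>1)" using pistar_inv_rtrancl[OF s1(1) inv] .
  obtain \<alpha>2 where s2: "prefix \<alpha>2 (stack run b)" "((b, c, cT1, \<alpha>1), (b, c, cT1, \<alpha>2)) \<in> T\<^sup>*"
    using pistar_pops_to_stack_prefix[OF inv1 assms(2) s1(2)] by blast
  have inv2: "pistar_inv (b, c, cT1, \<alpha>2)" using pistar_inv_rtrancl[OF s2(2) inv1] .
  obtain c3 where s3: "((b, c, cT1, \<alpha>2), (b, c3, cT1, stack run b)) \<in> T\<^sup>*"
    using pistar_pushes_stack[OF inv2 assms(2) s1(2) s2(1)] by blast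
  have inv3: "pistar_inv (b, c3, cT1, stack run b)" using pistar_inv_rtrancl[OF s3 inv2] .
  obtain c4 where "((b, c3, cT1, stack run b), (b', c4, cT1, stack run b)) \<in> T"
    using pistar_act_step[OF inv3 s1(2) assms(2,3)] by blast
  then have "((b, c, cT, \<alpha>), (b', c4, cT1, stack run b)) \<in> T\<^sup>*"
    using s1(1) s2(2) s3 by (meson rtrancl_trans rtrancl_into_rtrancl)
  then show ?thesis by (intro exI[of _ "(b', c4, cT1, stack run b)"]) simp
qed

lemma pistar_follows_pg_path:
  assumes "(b, g) \<in> R\<^sup>*" and "td_goal Q g"
  shows "\<forall>s. pistar_inv s \<and> fst s = b \<longrightarrow> (\<exists>g'. (s, g') \<in> T\<^sup>* \<and> t_goal Q g')"
  using assms(1)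
proof (induction rule: converse_rtrancl_induct)
  case base
  show ?case
  proof (intro allI impI)
    fix s assume "pistar_inv s \<and> fst s = g"
    then show "\<exists>g'. (s, g') \<in> T\<^sup>* \<and> t_goal Q g'"
      using assms(2) by (intro exI[of _ s]) (simp add: t_goal_def)
  qed
next
  case (step y z)
  show ?case
  proof (intro allI impI)
    fix s assume s: "pistar_inv s \<and> fst s = y"
    show "\<exists>g'. (s, g') \<in> T\<^sup>* \<and> t_goal Q g'"
    proof (cases "td_goal Q y")
      case True
      then show ?thesis using s by (intro exI[of _ s]) (simp add: t_goal_def)
    next
      case False
      obtain c cT \<alpha> where s_eq: "s = (y, c, cT, \<alpha>)" using s by (cases s) auto
      obtain s' where s': "(s, s') \<in> T\<^sup>*" "fst s' = z"
        using pistar_simulates_pg_rel[of y c cT \<alpha> z] s s_eq False step.hyps(1) by auto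
      then have "pistar_inv s'" using pistar_inv_rtrancl s by blast
      then obtain g' where "(s', g') \<in> T\<^sup>*" "t_goal Q g'" using step.IH s'(2) by blast
      then show ?thesis using s'(1) by (meson rtrancl_trans)
    qed
  qed
qed

lemma pistar_strong_cyclic: "strong_cyclic Q (pistar Q \<pi> sc run)"
  unfolding strong_cyclic_def
proof (intro allI impI)
  fix s assume "(t_init Q, s) \<in> T\<^sup>*"
  then have inv: "pistar_inv s" using pistar_inv_rtrancl pistar_inv_init by blast
  then have "fst s \<in> N" by (cases s) (simp add: pistar_invD(1))
  then obtain g where "(fst s, g) \<in> R\<^sup>*" "td_goal Q g" using pg_node_reaches_goal by blast
  then show "\<exists>g. (s, g) \<in> T\<^sup>* \<and> t_goal Q g" using pistar_follows_pg_path inv by blast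
qed

end

theorem theorem15:
  fixes Q :: "('f,'v,'a) qnp" and \<pi> :: "('f,'v,'a) policy"
    and sc :: "('f,'v) bstate \<Rightarrow> nat" and run :: "('f,'v) sieve_run"
  assumes "wf_qnp Q"
    and "is_policy Q \<pi>"
    and "solves Q \<pi>"
    and "scc_indexing Q \<pi> sc"
    and "sieve_run Q \<pi> run"
  shows "strong_cyclic Q (pistar Q \<pi> sc run)"
proof -
  interpret pistar_setting Q \<pi> run sc
    using assms by unfold_locales
  show ?thesis by (rule pistar_strong_cyclic)
qed

end
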